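(* ($\mathrm{ZFCU}_R$) (1) There is a set of urelements $A$ over which homogeneity holds. (2) If $A\subseteq A'$ are sets of urelements and homogeneity holds over $A$, then homogeneity holds over $A'$. (3) Every set of urelements $A$ is a subset of some set of urelements $A'$ over which homogeneity holds.
   Context: Urelement set theory in the language $\{\in,\mathcal{A}\}$ with $\mathcal{A}(x)$ meaning $x$ is a urelement (urelements have no members). $\mathrm{ZFCU}_R$ is ZFC with urelements: Extensionality for sets, Foundation, Pairing, Union, Powerset, Separation, Infinity, Replacement (not Collection) and AC. The kernel $ker(x)$ is the set of urelements in the transitive closure of $\{x\}$. Any permutation of a set of urelements extends (as the identity on other urelements, and by $\pi x=\{\pi y: y\in x\}$ on sets) to an $\in$-automorphism of the universe. Homogeneity holds over a set of urelements $A$ if whenever $B,C$ are sets of urelements with $B\cup C$ disjoint from $A$ and $B$ equinumerous with $C$, there is such an automorphism $\pi$ with $\pi B=C$ that fixes every element of $A$. *)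

theory Defs
  imports Main
begin

datatype fm =
    FMem nat nat
  | FUr nat
  | FEq nat nat
  | FNeg fm
  | FConj fm fm
  | FEx nat fm

text \<open>A structure is a universe (the type 'a) with a membership relation mem
  (mem x y means x \<in> y) and a urelement predicate ur.\<close>

primrec sat :: "('a \<Rightarrow> 'a \<Rightarrow> bool) \<Rightarrow> ('a \<Rightarrow> bool) \<Rightarrow> (nat \<Rightarrow> 'a) \<Rightarrow> fm \<Rightarrow> bool" where
  "sat mem ur e (FMem i j) = mem (e i) (e j)"
| "sat mem ur e (FUr i) = ur (e i)"
| "sat mem ur e (FEq i j) = (e i = e j)"
| "sat mem ur e (FNeg \<phi>) = (\<not> sat mem ur e \<phi>)"
| "sat mem ur e (FConj \<phi> \<psi>) = (sat mem ur e \<phi> \<and> sat mem ur e \<psi>)"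
| "sat mem ur e (FEx i \<phi>) = (\<exists>a. sat mem ur (e(i := a)) \<phi>)"

definition upair_in :: "('a \<Rightarrow> 'a \<Rightarrow> bool) \<Rightarrow> ('a \<Rightarrow> bool) \<Rightarrow> 'a \<Rightarrow> 'a \<Rightarrow> 'a \<Rightarrow> bool" where
  "upair_in mem ur x y z \<longleftrightarrow> \<not> ur z \<and> (\<forall>w. mem w z \<longleftrightarrow> w = x \<or> w = y)"

definition opair_in :: "('a \<Rightarrow> 'a \<Rightarrow> bool) \<Rightarrow> ('a \<Rightarrow> bool) \<Rightarrow> 'a \<Rightarrow> 'a \<Rightarrow> 'a \<Rightarrow> bool" where
  "opair_in mem ur x y p \<longleftrightarrow>
     (\<exists>s t. upair_in mem ur x x s \<and> upair_in mem ur x y t \<and> upair_in mem ur s t p)"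

definition rel_in :: "('a \<Rightarrow> 'a \<Rightarrow> bool) \<Rightarrow> ('a \<Rightarrow> bool) \<Rightarrow> 'a \<Rightarrow> 'a \<Rightarrow> 'a \<Rightarrow> bool" where
  "rel_in mem ur r x y \<longleftrightarrow> (\<exists>p. mem p r \<and> opair_in mem ur x y p)"

definition wellorders_in :: "('a \<Rightarrow> 'a \<Rightarrow> bool) \<Rightarrow> ('a \<Rightarrow> bool) \<Rightarrow> 'a \<Rightarrow> 'a \<Rightarrow> bool" where
  "wellorders_in mem ur r x \<longleftrightarrow>
     (\<forall>u. mem u x \<longrightarrow> \<not> rel_in mem ur r u u) \<and>
     (\<forall>u v w. mem u x \<and> mem v x \<and> mem w x \<and> rel_in mem ur r u v \<and> rel_in mem ur r v w
        \<longrightarrow> rel_in mem ur r u w) \<and>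
     (\<forall>u v. mem u x \<and> mem v x \<longrightarrow> rel_in mem ur r u v \<or> u = v \<or> rel_in mem ur r v u) \<and>
     (\<forall>s. (\<forall>u. mem u s \<longrightarrow> mem u x) \<and> (\<exists>u. mem u s) \<longrightarrow>
        (\<exists>m. mem m s \<and> (\<forall>u. mem u s \<longrightarrow> \<not> rel_in mem ur r u m)))"

definition bij_in :: "('a \<Rightarrow> 'a \<Rightarrow> bool) \<Rightarrow> ('a \<Rightarrow> bool) \<Rightarrow> 'a \<Rightarrow> 'a \<Rightarrow> 'a \<Rightarrow> bool" where
  "bij_in mem ur f B C \<longleftrightarrow>
     (\<forall>p. mem p f \<longrightarrow> (\<exists>u v. opair_in mem ur u v p \<and> mem u B \<and> mem v C)) \<and>
     (\<forall>u. mem u B \<longrightarrow> (\<exists>!v. rel_in mem ur f u v)) \<and>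
     (\<forall>v. mem v C \<longrightarrow> (\<exists>!u. rel_in mem ur f u v))"

definition equinum_in :: "('a \<Rightarrow> 'a \<Rightarrow> bool) \<Rightarrow> ('a \<Rightarrow> bool) \<Rightarrow> 'a \<Rightarrow> 'a \<Rightarrow> bool" where
  "equinum_in mem ur B C \<longleftrightarrow> (\<exists>f. bij_in mem ur f B C)"

definition urset_in :: "('a \<Rightarrow> 'a \<Rightarrow> bool) \<Rightarrow> ('a \<Rightarrow> bool) \<Rightarrow> 'a \<Rightarrow> bool" where
  "urset_in mem ur x \<longleftrightarrow> \<not> ur x \<and> (\<forall>y. mem y x \<longrightarrow> ur y)"

text \<open>The action on urelements of the automorphism induced by a permutation p of the
  set of urelements D (identity on urelements outside D): a is sent to b.\<close>
definition act_in :: "('a \<Rightarrow> 'a \<Rightarrow> bool) \<Rightarrow> ('a \<Rightarrow> bool) \<Rightarrow> 'a \<Rightarrow> 'a \<Rightarrow> 'a \<Rightarrow> 'a \<Rightarrow> bool" where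
  "act_in mem ur p D a b \<longleftrightarrow> (mem a D \<and> rel_in mem ur p a b) \<or> (\<not> mem a D \<and> b = a)"

text \<open>Homogeneity over the set of urelements A: whenever B, C are equinumerous sets of
  urelements with B \<union> C disjoint from A, there is an automorphism \<pi> induced by a permutation
  p of a set of urelements D with \<pi> B = C fixing every element of A.  Since B, C, A consist
  of urelements, \<pi> B = {\<pi> b : b \<in> B} and \<pi> fixes a iff \<pi> a = a.\<close>
definition homogeneous_over :: "('a \<Rightarrow> 'a \<Rightarrow> bool) \<Rightarrow> ('a \<Rightarrow> bool) \<Rightarrow> 'a \<Rightarrow> bool" where
  "homogeneous_over mem ur A \<longleftrightarrow>
     (\<forall>B C. urset_in mem ur B \<and> urset_in mem ur C \<and>
        (\<forall>u. (mem u B \<or> mem u C) \<longrightarrow> \<not> mem u A) \<and> equinum_in mem ur B C \<longrightarrow>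
        (\<exists>D p. urset_in mem ur D \<and> bij_in mem ur p D D \<and>
           (\<forall>a. mem a A \<longrightarrow> act_in mem ur p D a a) \<and>
           (\<forall>c. mem c C \<longleftrightarrow> (\<exists>b. mem b B \<and> act_in mem ur p D b c))))"

definition ZFCU_R :: "('a \<Rightarrow> 'a \<Rightarrow> bool) \<Rightarrow> ('a \<Rightarrow> bool) \<Rightarrow> bool" where
  "ZFCU_R mem ur \<longleftrightarrow>
    \<comment> \<open>urelements have no members\<close>
    (\<forall>x y. ur x \<longrightarrow> \<not> mem y x) \<and>
    \<comment> \<open>Extensionality for sets\<close>
    (\<forall>x y. \<not> ur x \<and> \<not> ur y \<and> (\<forall>z. mem z x \<longleftrightarrow> mem z y) \<longrightarrow> x = y) \<and>
    \<comment> \<open>Foundation\<close>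
    (\<forall>x. (\<exists>y. mem y x) \<longrightarrow> (\<exists>y. mem y x \<and> \<not> (\<exists>z. mem z x \<and> mem z y))) \<and>
    \<comment> \<open>Pairing\<close>
    (\<forall>x y. \<exists>z. upair_in mem ur x y z) \<and>
    \<comment> \<open>Union\<close>
    (\<forall>x. \<exists>u. \<not> ur u \<and> (\<forall>w. mem w u \<longleftrightarrow> (\<exists>y. mem y x \<and> mem w y))) \<and>
    \<comment> \<open>Powerset\<close>
    (\<forall>x. \<exists>p. \<not> ur p \<and> (\<forall>y. mem y p \<longleftrightarrow> (\<not> ur y \<and> (\<forall>z. mem z y \<longrightarrow> mem z x)))) \<and>
    \<comment> \<open>Separation (schema, with parameters)\<close>
    (\<forall>\<phi> v e x. \<exists>y. \<not> ur y \<and>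
        (\<forall>z. mem z y \<longleftrightarrow> (mem z x \<and> sat mem ur (e(v := z)) \<phi>))) \<and>
    \<comment> \<open>Infinity\<close>
    (\<exists>x. \<not> ur x \<and> (\<exists>e0. mem e0 x \<and> \<not> ur e0 \<and> (\<forall>z. \<not> mem z e0)) \<and>
        (\<forall>y. mem y x \<longrightarrow> (\<exists>s. mem s x \<and> (\<forall>w. mem w s \<longleftrightarrow> (mem w y \<or> w = y))))) \<and>
    \<comment> \<open>Replacement (schema, with parameters)\<close>
    (\<forall>\<phi> u v e a. (\<forall>x. mem x a \<longrightarrow> (\<exists>!y. sat mem ur (e(u := x, v := y)) \<phi>)) \<longrightarrow>
        (\<exists>b. \<not> ur b \<and> (\<forall>y. mem y b \<longleftrightarrow> (\<exists>x. mem x a \<and> sat mem ur (e(u := x, v := y)) \<phi>)))) \<and>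
    \<comment> \<open>AC: every set is well-orderable\<close>
    (\<forall>x. \<not> ur x \<longrightarrow> (\<exists>r. wellorders_in mem ur r x))"

end

theory Submission
  imports Defs "HOL-Combinatorics.Permutations"
begin

text \<open>Say that a set \<open>A\<close> of urelements has room if every set \<open>S\<close> of urelements outside \<open>A\<close> injects
  into a set of urelements outside \<open>A \<union> S\<close>. Over such an \<open>A\<close>, a bijection \<open>f : B \<rightarrow> C\<close> between
  sets outside \<open>A\<close> is realised by a permutation: take an injection \<open>g\<close> of \<open>B \<union> C\<close> into
  urelements outside \<open>A \<union> B \<union> C\<close>; swapping each \<open>b \<in> B\<close> with \<open>g (f b)\<close> and then each
  \<open>c \<in> C\<close> with \<open>g c\<close> sends \<open>b\<close> to \<open>f b\<close> and fixes \<open>A\<close>.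

  Such a set exists. If \<open>\<emptyset>\<close> has no room, some set \<open>S\<^sub>1\<close> of urelements has no injective
  copy outside itself. Well-order \<open>S\<^sub>1\<close> and let \<open>I\<close> be the least initial segment (or \<open>S\<^sub>1\<close>
  itself) having no copy outside some set \<open>A\<close>. Then \<open>A\<close> has room: a set \<open>S\<close> outside \<open>A\<close> cannot
  receive \<open>I\<close>, so by the comparison theorem for well-orders \<open>S\<close> injects into a smaller initial
  segment \<open>J\<close>; if \<open>S\<close> had no copy outside \<open>A \<union> S\<close>, neither would \<open>J\<close>, contradicting the
  minimality of \<open>I\<close>.

  Homogeneity is monotone: for \<open>A \<subseteq> A'\<close>, extend \<open>f\<close> by the identity on \<open>A' - A\<close>, realise
  the extension by a permutation \<open>\<pi>\<close> fixing \<open>A\<close>, and overwrite \<open>\<pi>\<close> on \<open>B \<union> (A' - A)\<close> by the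
  extension itself. Finally every \<open>A\<close> lies in the homogeneous set \<open>A \<union> A\<^sub>0\<close>.\<close>

section \<open>Formulas with de Bruijn indices\<close>

text \<open>Separation and Replacement are schemas over the named formulas \<^typ>\<open>fm\<close>; instances are
  written here with de Bruijn indices (\<open>DEx\<close> binds index 0, and \<open>a ## e\<close> pushes \<open>a\<close> on
  the environment) and translated by \<open>to_fm\<close>. A formula only reads finitely many entries of
  its environment, so environments are padded with \<^const>\<open>undefined\<close>.\<close>

datatype dfm = DMem nat nat | DUr nat | DEq nat nat | DNeg dfm | DConj dfm dfm | DEx dfm

definition env_cons :: "'a \<Rightarrow> (nat \<Rightarrow> 'a) \<Rightarrow> nat \<Rightarrow> 'a" (infixr "##" 65) where
  "env_cons a e n = (case n of 0 \<Rightarrow> a | Suc m \<Rightarrow> e m)"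

lemma env_cons_simps [simp]:
  "(a ## e) 0 = a" "(a ## e) (Suc n) = e n" "(a ## e) 1 = e 0"
  "(a ## e) (numeral k) = e (pred_numeral k)"
  by (simp_all add: env_cons_def numeral_eq_Suc)

primrec dsat :: "('a \<Rightarrow> 'a \<Rightarrow> bool) \<Rightarrow> ('a \<Rightarrow> bool) \<Rightarrow> (nat \<Rightarrow> 'a) \<Rightarrow> dfm \<Rightarrow> bool" where
  "dsat mem ur e (DMem i j) = mem (e i) (e j)"
| "dsat mem ur e (DUr i) = ur (e i)"
| "dsat mem ur e (DEq i j) = (e i = e j)"
| "dsat mem ur e (DNeg \<phi>) = (\<not> dsat mem ur e \<phi>)"
| "dsat mem ur e (DConj \<phi> \<psi>) = (dsat mem ur e \<phi> \<and> dsat mem ur e \<psi>)"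
| "dsat mem ur e (DEx \<phi>) = (\<exists>a. dsat mem ur (a ## e) \<phi>)"

text \<open>Under \<open>d\<close> binders, the bound index \<open>i < d\<close> gets the odd name \<open>2(d-1-i)+1\<close> and the
  free index \<open>i \<ge> d\<close> the even name \<open>2(i-d)\<close>; hence the name \<open>2d+1\<close> of a new binder is fresh.\<close>

definition fm_var :: "nat \<Rightarrow> nat \<Rightarrow> nat" where
  "fm_var d i = (if i < d then 2 * (d - 1 - i) + 1 else 2 * (i - d))"

primrec to_fm :: "nat \<Rightarrow> dfm \<Rightarrow> fm" where
  "to_fm d (DMem i j) = FMem (fm_var d i) (fm_var d j)"
| "to_fm d (DUr i) = FUr (fm_var d i)"
| "to_fm d (DEq i j) = FEq (fm_var d i) (fm_var d j)"
| "to_fm d (DNeg \<phi>) = FNeg (to_fm d \<phi>)"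
| "to_fm d (DConj \<phi> \<psi>) = FConj (to_fm d \<phi>) (to_fm d \<psi>)"
| "to_fm d (DEx \<phi>) = FEx (2 * d + 1) (to_fm (Suc d) \<phi>)"

lemma sat_to_fm: "sat mem ur e (to_fm d \<phi>) = dsat mem ur (\<lambda>i. e (fm_var d i)) \<phi>"
proof (induction \<phi> arbitrary: d e)
  case (DEx \<phi>)
  have "(\<lambda>i. (e(2 * d + 1 := a)) (fm_var (Suc d) i)) = a ## (\<lambda>i. e (fm_var d i))" for a
  proof
    fix i
    show "(e(2 * d + 1 := a)) (fm_var (Suc d) i) = (a ## (\<lambda>i. e (fm_var d i))) i"
    proof (cases i)
      case (Suc k)
      have "fm_var (Suc d) (Suc k) = fm_var d k" "fm_var d k \<noteq> 2 * d + 1"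
        by (auto simp: fm_var_def) presburger
      then show ?thesis using Suc by simp
    qed (simp add: fm_var_def)
  qed
  then show ?case using DEx.IH by simp
qed simp_all

primrec drename :: "(nat \<Rightarrow> nat) \<Rightarrow> dfm \<Rightarrow> dfm" where
  "drename \<sigma> (DMem i j) = DMem (\<sigma> i) (\<sigma> j)"
| "drename \<sigma> (DUr i) = DUr (\<sigma> i)"
| "drename \<sigma> (DEq i j) = DEq (\<sigma> i) (\<sigma> j)"
| "drename \<sigma> (DNeg \<phi>) = DNeg (drename \<sigma> \<phi>)"
| "drename \<sigma> (DConj \<phi> \<psi>) = DConj (drename \<sigma> \<phi>) (drename \<sigma> \<psi>)"
| "drename \<sigma> (DEx \<phi>) = DEx (drename (case_nat 0 (\<lambda>m. Suc (\<sigma> m))) \<phi>)"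

lemma dsat_drename: "dsat mem ur e (drename \<sigma> \<phi>) = dsat mem ur (e \<circ> \<sigma>) \<phi>"
proof (induction \<phi> arbitrary: \<sigma> e)
  case (DEx \<phi>)
  have "(\<lambda>n. (a ## e) (case_nat 0 (\<lambda>m. Suc (\<sigma> m)) n)) = a ## (\<lambda>n. e (\<sigma> n))" for a
    by (rule ext) (simp add: env_cons_def split: nat.split)
  then show ?case using DEx.IH by (simp add: comp_def)
qed simp_all

definition DOr :: "dfm \<Rightarrow> dfm \<Rightarrow> dfm" where "DOr \<phi> \<psi> = DNeg (DConj (DNeg \<phi>) (DNeg \<psi>))"
definition DImp :: "dfm \<Rightarrow> dfm \<Rightarrow> dfm" where "DImp \<phi> \<psi> = DNeg (DConj \<phi> (DNeg \<psi>))"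
definition DIff :: "dfm \<Rightarrow> dfm \<Rightarrow> dfm" where "DIff \<phi> \<psi> = DConj (DImp \<phi> \<psi>) (DImp \<psi> \<phi>)"
definition DAll :: "dfm \<Rightarrow> dfm" where "DAll \<phi> = DNeg (DEx (DNeg \<phi>))"

lemma dsat_connectives [simp]:
  "dsat mem ur e (DOr \<phi> \<psi>) = (dsat mem ur e \<phi> \<or> dsat mem ur e \<psi>)"
  "dsat mem ur e (DImp \<phi> \<psi>) = (dsat mem ur e \<phi> \<longrightarrow> dsat mem ur e \<psi>)"
  "dsat mem ur e (DIff \<phi> \<psi>) = (dsat mem ur e \<phi> \<longleftrightarrow> dsat mem ur e \<psi>)"
  "dsat mem ur e (DAll \<phi>) = (\<forall>a. dsat mem ur (a ## e) \<phi>)"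
  by (auto simp: DOr_def DImp_def DIff_def DAll_def)

definition dupair :: "nat \<Rightarrow> nat \<Rightarrow> nat \<Rightarrow> dfm" where
  "dupair i j k = DConj (DNeg (DUr k))
     (DAll (DIff (DMem 0 (Suc k)) (DOr (DEq 0 (Suc i)) (DEq 0 (Suc j)))))"

definition dopair :: "nat \<Rightarrow> nat \<Rightarrow> nat \<Rightarrow> dfm" where
  "dopair i j k = DEx (DEx (DConj (dupair (i + 2) (i + 2) 1)
     (DConj (dupair (i + 2) (j + 2) 0) (dupair 1 0 (k + 2)))))"

definition drel :: "nat \<Rightarrow> nat \<Rightarrow> nat \<Rightarrow> dfm" where
  "drel k i j = DEx (DConj (DMem 0 (Suc k)) (dopair (Suc i) (Suc j) 0))"

definition durset :: "nat \<Rightarrow> dfm" where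
  "durset i = DConj (DNeg (DUr i)) (DAll (DImp (DMem 0 (Suc i)) (DUr 0)))"

lemma dsat_basic_formulas [simp]:
  "dsat mem ur e (dupair i j k) = upair_in mem ur (e i) (e j) (e k)"
  "dsat mem ur e (dopair i j k) = opair_in mem ur (e i) (e j) (e k)"
  "dsat mem ur e (drel k i j) = rel_in mem ur (e k) (e i) (e j)"
  "dsat mem ur e (durset i) = urset_in mem ur (e i)"
  by (simp_all add: dupair_def dopair_def drel_def durset_def upair_in_def opair_in_def
      rel_in_def urset_in_def numeral_eq_Suc)


section \<open>Sets, ordered pairs and relations in a model of \<open>ZFCU\<^sub>R\<close>\<close>

locale zfcu_model =
  fixes mem :: "'a \<Rightarrow> 'a \<Rightarrow> bool" and ur :: "'a \<Rightarrow> bool"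
  assumes ZFCU_R: "ZFCU_R mem ur"
begin

abbreviation elts :: "'a \<Rightarrow> 'a set" where "elts x \<equiv> {y. mem y x}"
abbreviation "urset \<equiv> urset_in mem ur"
abbreviation "upair \<equiv> upair_in mem ur"
abbreviation "opair \<equiv> opair_in mem ur"
abbreviation "rel \<equiv> rel_in mem ur"

lemma ZFCU_R_axioms:
  shows "\<forall>x y. \<exists>z. upair x y z"
    and "\<forall>x. \<exists>u. \<not> ur u \<and> (\<forall>w. mem w u \<longleftrightarrow> (\<exists>y. mem y x \<and> mem w y))"
    and "\<forall>x. \<exists>p. \<not> ur p \<and> (\<forall>y. mem y p \<longleftrightarrow> (\<not> ur y \<and> (\<forall>z. mem z y \<longrightarrow> mem z x)))"
    and "\<forall>\<phi> v e x. \<exists>y. \<not> ur y \<and> (\<forall>z. mem z y \<longleftrightarrow> (mem z x \<and> sat mem ur (e(v := z)) \<phi>))"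
    and "\<forall>\<phi> u v e a. (\<forall>x. mem x a \<longrightarrow> (\<exists>!y. sat mem ur (e(u := x, v := y)) \<phi>)) \<longrightarrow>
        (\<exists>b. \<not> ur b \<and> (\<forall>y. mem y b \<longleftrightarrow> (\<exists>x. mem x a \<and> sat mem ur (e(u := x, v := y)) \<phi>)))"
    and "\<forall>x. \<not> ur x \<longrightarrow> (\<exists>r. wellorders_in mem ur r x)"
  using ZFCU_R[unfolded ZFCU_R_def] by - (elim conjE, assumption)+

lemma pairing: "\<exists>z. upair x y z"
  using ZFCU_R_axioms(1) by blast

lemma Union_exists: "\<exists>u. \<not> ur u \<and> elts u = (\<Union>y\<in>elts x. elts y)"
proof -
  obtain u where "\<not> ur u" "\<forall>w. mem w u \<longleftrightarrow> (\<exists>y. mem y x \<and> mem w y)"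
    using ZFCU_R_axioms(2) by blast
  then show ?thesis by (intro exI[of _ u]) auto
qed

lemma Pow_exists: "\<exists>p. \<not> ur p \<and> elts p = {y. \<not> ur y \<and> elts y \<subseteq> elts x}"
proof -
  obtain p where "\<not> ur p" "\<forall>y. mem y p \<longleftrightarrow> \<not> ur y \<and> (\<forall>z. mem z y \<longrightarrow> mem z x)"
    using ZFCU_R_axioms(3) by blast
  then show ?thesis by (intro exI[of _ p]) auto
qed

lemma well_ordering: "\<not> ur x \<Longrightarrow> \<exists>r. wellorders_in mem ur r x"
  using ZFCU_R_axioms(6) by blast

lemma separation: "\<exists>y. \<not> ur y \<and> elts y = {z \<in> elts x. dsat mem ur (z ## e) \<phi>}"
proof -
  define e' where "e' n = e (n div 2 - 1)" for n
  have env: "(\<lambda>i. (e'(0 := z)) (fm_var 0 i)) = z ## e" for z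
    by (rule ext) (simp add: e'_def fm_var_def env_cons_def split: nat.split)
  obtain y where "\<not> ur y" "\<forall>z. mem z y \<longleftrightarrow> mem z x \<and> sat mem ur (e'(0 := z)) (to_fm 0 \<phi>)"
    using ZFCU_R_axioms(4)[rule_format, where \<phi> = "to_fm 0 \<phi>" and v = 0 and e = e'] by blast
  then show ?thesis by (simp only: sat_to_fm env) blast
qed

lemma replacement:
  assumes "\<And>x. mem x X \<Longrightarrow> \<exists>!y. dsat mem ur (y ## x ## e) \<phi>"
  shows "\<exists>Y. \<not> ur Y \<and> elts Y = {y. \<exists>x\<in>elts X. dsat mem ur (y ## x ## e) \<phi>}"
proof -
  define e' where "e' n = e (n div 2 - 2)" for n
  have env: "(\<lambda>i. (e'(2 := x, 0 := y)) (fm_var 0 i)) = y ## x ## e" for x y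
    by (rule ext) (simp add: e'_def fm_var_def env_cons_def split: nat.split)
  have "\<forall>x. mem x X \<longrightarrow> (\<exists>!y. sat mem ur (e'(2 := x, 0 := y)) (to_fm 0 \<phi>))"
    using assms by (simp only: sat_to_fm env) blast
  then obtain Y where "\<not> ur Y"
    "\<forall>y. mem y Y \<longleftrightarrow> (\<exists>x. mem x X \<and> sat mem ur (e'(2 := x, 0 := y)) (to_fm 0 \<phi>))"
    using ZFCU_R_axioms(5)[rule_format, where \<phi> = "to_fm 0 \<phi>" and u = 2 and v = 0 and e = e'] by blast
  then show ?thesis by (simp only: sat_to_fm env) blast
qed

lemma empty_set_exists: "\<exists>x. \<not> ur x \<and> elts x = {}"
  using separation[of _ _ "DNeg (DEq 0 0)"] by auto

lemma Un_exists: "\<exists>u. \<not> ur u \<and> elts u = elts x \<union> elts y"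
proof -
  obtain z where z: "upair x y z"
    using pairing by blast
  obtain u where "\<not> ur u" "elts u = (\<Union>w\<in>elts z. elts w)"
    using Union_exists by blast
  moreover have "elts z = {x, y}"
    using z unfolding upair_in_def by auto
  ultimately show ?thesis by auto
qed

lemma Diff_exists: "\<exists>d. \<not> ur d \<and> elts d = elts x - elts y"
  using separation[of x "y ## undefined" "DNeg (DMem 0 1)"] by auto

lemma Int_exists: "\<exists>d. \<not> ur d \<and> elts d = elts x \<inter> elts y"
  using separation[of x "y ## undefined" "DMem 0 1"] by auto

lemma urset_Un: "urset x \<Longrightarrow> urset y \<Longrightarrow> \<exists>u. urset u \<and> elts u = elts x \<union> elts y"
  using Un_exists[of x y] unfolding urset_in_def by auto

lemma urset_subset: "urset x \<Longrightarrow> \<not> ur y \<Longrightarrow> elts y \<subseteq> elts x \<Longrightarrow> urset y"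
  unfolding urset_in_def by blast

lemma opair_exists: "\<exists>p. opair x y p"
proof -
  obtain s t where "upair x x s" "upair x y t"
    using pairing by blast
  moreover obtain p where "upair s t p"
    using pairing by blast
  ultimately show ?thesis
    unfolding opair_in_def by blast
qed

lemma opair_inj:
  assumes "opair x y p" and "opair x' y' p"
  shows "x = x' \<and> y = y'"
proof -
  have upair_elts: "upair a b c \<Longrightarrow> elts c = {a, b}" for a b c
    unfolding upair_in_def by auto
  obtain s t where st: "upair x x s" "upair x y t" "upair s t p"
    using assms(1) unfolding opair_in_def by blast
  obtain s' t' where st': "upair x' x' s'" "upair x' y' t'" "upair s' t' p"
    using assms(2) unfolding opair_in_def by blast
  have "{s, t} = {s', t'}"
    using upair_elts[OF st(3)] upair_elts[OF st'(3)] by simp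
  then have "{elts s, elts t} = {elts s', elts t'}"
    by (auto simp: doubleton_eq_iff)
  then have "{{x}, {x, y}} = {{x'}, {x', y'}}"
    using st st' by (simp add: upair_elts)
  then show ?thesis
    by (simp add: doubleton_eq_iff) blast
qed

lemma rel_in_field:
  assumes "\<forall>p. mem p k \<longrightarrow> (\<exists>x y. opair x y p \<and> mem x X \<and> mem y Y)" and "rel k a b"
  shows "mem a X \<and> mem b Y"
  using assms opair_inj unfolding rel_in_def by blast

lemma product_exists: "\<exists>P. \<forall>x y p. mem x X \<and> mem y Y \<and> opair x y p \<longrightarrow> mem p P"
proof -
  obtain U where U: "elts U = elts X \<union> elts Y"
    using Un_exists by blast
  obtain P1 where P1: "elts P1 = {y. \<not> ur y \<and> elts y \<subseteq> elts U}"
    using Pow_exists by blast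
  obtain P2 where P2: "elts P2 = {y. \<not> ur y \<and> elts y \<subseteq> elts P1}"
    using Pow_exists by blast
  have "mem p P2" if x: "mem x X" and y: "mem y Y" and p: "opair x y p" for x y p
  proof -
    obtain s t where "upair x x s" "upair x y t" "upair s t p"
      using p unfolding opair_in_def by blast
    then have "mem s P1" "mem t P1" and "upair s t p"
      using x y U P1 unfolding upair_in_def by auto
    then show ?thesis
      using P2 unfolding upair_in_def by auto
  qed
  then show ?thesis by blast
qed

lemma relation_exists:
  assumes R: "\<And>x y. mem x X \<Longrightarrow> mem y Y \<Longrightarrow> dsat mem ur (y ## x ## e) \<phi> \<longleftrightarrow> R x y"
  shows "\<exists>k. (\<forall>p. mem p k \<longrightarrow> (\<exists>x y. opair x y p \<and> mem x X \<and> mem y Y))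
           \<and> (\<forall>x y. rel k x y \<longleftrightarrow> mem x X \<and> mem y Y \<and> R x y)"
proof -
  obtain P where P: "\<forall>x y p. mem x X \<and> mem y Y \<and> opair x y p \<longrightarrow> mem p P"
    using product_exists by blast
  \<comment> \<open>moves the parameters of \<open>\<phi>\<close> past the pair, \<open>X\<close> and \<open>Y\<close> of the separating formula\<close>
  define shift :: "nat \<Rightarrow> nat" where "shift n = (if n < 2 then n else n + 3)" for n
  have env: "(\<lambda>n. (y ## x ## p ## X ## Y ## e) (shift n)) = y ## x ## e" for x y p
    by (rule ext) (simp add: shift_def env_cons_def split: nat.split)
  have "(\<exists>x y. opair x y p \<and> mem x X \<and> mem y Y \<and> dsat mem ur (y ## x ## e) \<phi>) \<longleftrightarrow>
      (\<exists>x y. opair x y p \<and> mem x X \<and> mem y Y \<and> R x y)" for p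
    using R by blast
  then obtain k where k: "elts k = {p \<in> elts P. \<exists>x y. opair x y p \<and> mem x X \<and> mem y Y \<and> R x y}"
    using separation[of P "X ## Y ## e"
        "DEx (DEx (DConj (dopair 1 0 2) (DConj (DMem 1 3) (DConj (DMem 0 4) (drename shift \<phi>)))))"]
    by (simp add: dsat_drename comp_def env) blast
  have "rel k a b \<longleftrightarrow> mem a X \<and> mem b Y \<and> R a b" for a b
    using k P opair_exists[of a b] opair_inj[of a b _] unfolding rel_in_def by blast
  then show ?thesis
    using k by blast
qed

subsection \<open>Functions of the metatheory coded by sets of the model\<close>

definition internal_on :: "'a \<Rightarrow> ('a \<Rightarrow> 'a) \<Rightarrow> bool" where
  "internal_on X h \<longleftrightarrow>
     (\<exists>k. (\<forall>p. mem p k \<longrightarrow> (\<exists>x y. opair x y p)) \<and> (\<forall>x y. rel k x y \<longleftrightarrow> mem x X \<and> h x = y))"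

lemma internal_onI:
  assumes h: "\<And>x y. mem x X \<Longrightarrow> dsat mem ur (y ## x ## e) \<phi> \<longleftrightarrow> h x = y"
  shows "internal_on X h"
proof -
  have "\<exists>!y. dsat mem ur (y ## x ## e) \<phi>" if "mem x X" for x
    using h[OF that] by auto
  then obtain Y where Y: "elts Y = {y. \<exists>x\<in>elts X. dsat mem ur (y ## x ## e) \<phi>}"
    using replacement by blast
  have hY: "mem (h x) Y" if "mem x X" for x
    using Y h that by auto
  obtain k where k: "\<forall>p. mem p k \<longrightarrow> (\<exists>x y. opair x y p \<and> mem x X \<and> mem y Y)"
      "\<forall>x y. rel k x y \<longleftrightarrow> mem x X \<and> mem y Y \<and> h x = y"
    using relation_exists[of X Y e \<phi> "\<lambda>x y. h x = y"] h by blast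
  have "\<forall>x y. rel k x y \<longleftrightarrow> mem x X \<and> h x = y"
    using k(2) hY by blast
  moreover have "\<forall>p. mem p k \<longrightarrow> (\<exists>x y. opair x y p)"
    using k(1) by blast
  ultimately show ?thesis
    unfolding internal_on_def by blast
qed

lemma internal_on_image:
  assumes "internal_on X h"
  shows "\<exists>Y. \<not> ur Y \<and> elts Y = h ` elts X"
proof -
  obtain k where k: "\<forall>x y. rel k x y \<longleftrightarrow> mem x X \<and> h x = y"
    using assms unfolding internal_on_def by blast
  obtain Y where Y: "\<not> ur Y" "elts Y = {y. \<exists>x\<in>elts X. rel k x y}"
    using replacement[of X "k ## undefined" "drel 2 1 0"] k by auto
  have "elts Y = h ` elts X"
    using Y(2) k by auto
  then show ?thesis
    using Y(1) by blast
qed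

lemma internal_on_cong: "internal_on X h \<Longrightarrow> (\<And>x. mem x X \<Longrightarrow> h x = g x) \<Longrightarrow> internal_on X g"
  unfolding internal_on_def by metis

lemma internal_on_subset:
  assumes "internal_on X h" and "elts Z \<subseteq> elts X"
  shows "internal_on Z h"
proof -
  obtain k where k: "\<forall>x y. rel k x y \<longleftrightarrow> mem x X \<and> h x = y"
    using assms(1) unfolding internal_on_def by blast
  show ?thesis
    by (rule internal_onI[of Z "k ## undefined" "drel 2 1 0"]) (use k assms(2) in auto)
qed

lemma internal_on_Un:
  assumes "internal_on X h" and "internal_on Y h" and "elts Z = elts X \<union> elts Y"
  shows "internal_on Z h"
proof -
  obtain k where k: "\<forall>x y. rel k x y \<longleftrightarrow> mem x X \<and> h x = y"
    using assms(1) unfolding internal_on_def by blast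
  obtain l where l: "\<forall>x y. rel l x y \<longleftrightarrow> mem x Y \<and> h x = y"
    using assms(2) unfolding internal_on_def by blast
  show ?thesis
    by (rule internal_onI[of Z "k ## l ## undefined" "DOr (drel 2 1 0) (drel 3 1 0)"])
      (use k l assms(3) in auto)
qed

lemma internal_on_id: "internal_on X (\<lambda>x. x)"
  by (rule internal_onI[of X undefined "DEq 0 1"]) auto

lemma internal_on_comp:
  assumes "internal_on X h" and "internal_on Y g" and "h ` elts X \<subseteq> elts Y"
  shows "internal_on X (g \<circ> h)"
proof -
  obtain k where k: "\<forall>x y. rel k x y \<longleftrightarrow> mem x X \<and> h x = y"
    using assms(1) unfolding internal_on_def by blast
  obtain l where l: "\<forall>x y. rel l x y \<longleftrightarrow> mem x Y \<and> g x = y"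
    using assms(2) unfolding internal_on_def by blast
  show ?thesis
    by (rule internal_onI[of X "k ## l ## undefined" "DEx (DConj (drel 3 2 0) (drel 4 0 1))"])
      (use k l assms(3) in auto)
qed

lemma internal_on_inv:
  assumes "internal_on X h" and "inj_on h (elts X)" and "elts Y = h ` elts X"
  shows "internal_on Y (the_inv_into (elts X) h)"
proof -
  obtain k where k: "\<forall>x y. rel k x y \<longleftrightarrow> mem x X \<and> h x = y"
    using assms(1) unfolding internal_on_def by blast
  have "the_inv_into (elts X) h y \<in> elts X \<and> h (the_inv_into (elts X) h y) = y" if "mem y Y" for y
    using that assms(2,3) the_inv_into_into[of h "elts X" y "elts X"] f_the_inv_into_f[of h "elts X" y]
    by auto
  then show ?thesis
    by (intro internal_onI[of Y "k ## undefined" "drel 2 0 1"]) (use k assms(2) in \<open>auto simp: the_inv_into_f_f\<close>)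
qed

lemma internal_on_graph:
  assumes "internal_on X h" and "h ` elts X \<subseteq> elts Y"
  shows "\<exists>k. (\<forall>p. mem p k \<longrightarrow> (\<exists>u v. opair u v p \<and> mem u X \<and> mem v Y))
           \<and> (\<forall>x y. rel k x y \<longleftrightarrow> mem x X \<and> h x = y)"
proof -
  obtain k where pairs: "\<forall>q. mem q k \<longrightarrow> (\<exists>x y. opair x y q)"
    and k: "\<forall>x y. rel k x y \<longleftrightarrow> mem x X \<and> h x = y"
    using assms(1) unfolding internal_on_def by blast
  have "\<exists>u v. opair u v q \<and> mem u X \<and> mem v Y" if q: "mem q k" for q
  proof -
    obtain u v where "opair u v q"
      using pairs q by blast
    moreover have "rel k u v"
      using q \<open>opair u v q\<close> unfolding rel_in_def by blast
    then have "mem u X" and "h u = v"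
      using k by simp_all
    ultimately show ?thesis
      using assms(2) by blast
  qed
  then show ?thesis
    using k by blast
qed

lemma functional_rel_imp_internal_on:
  assumes pairs: "\<forall>p. mem p f \<longrightarrow> (\<exists>u v. opair u v p \<and> mem u X \<and> mem v Y)"
    and functional: "\<And>x. mem x X \<Longrightarrow> \<exists>!y. rel f x y"
  shows "\<exists>h. (\<forall>x y. rel f x y \<longleftrightarrow> mem x X \<and> h x = y) \<and> h ` elts X \<subseteq> elts Y
           \<and> internal_on X h"
proof -
  define h where "h x = (THE y. rel f x y)" for x
  have field: "rel f x y \<Longrightarrow> mem x X \<and> mem y Y" for x y
    using pairs rel_in_field by blast
  have rel_f: "rel f x y \<longleftrightarrow> mem x X \<and> h x = y" for x y
  proof
    assume "rel f x y"
    then show "mem x X \<and> h x = y"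
      using field functional unfolding h_def by (metis the1_equality)
  next
    assume "mem x X \<and> h x = y"
    then show "rel f x y"
      using functional unfolding h_def by (metis theI')
  qed
  have "h ` elts X \<subseteq> elts Y"
    using rel_f field by auto
  moreover have "\<forall>q. mem q f \<longrightarrow> (\<exists>x y. opair x y q)"
    using pairs by blast
  then have "internal_on X h"
    unfolding internal_on_def using rel_f by blast
  ultimately show ?thesis
    using rel_f by blast
qed

lemma bij_in_imp_bij_betw:
  assumes f: "bij_in mem ur f X Y"
  shows "\<exists>h. (\<forall>x y. rel f x y \<longleftrightarrow> mem x X \<and> h x = y)
           \<and> bij_betw h (elts X) (elts Y) \<and> internal_on X h"
proof -
  have pairs: "\<forall>p. mem p f \<longrightarrow> (\<exists>u v. opair u v p \<and> mem u X \<and> mem v Y)"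
    and functional: "\<And>x. mem x X \<Longrightarrow> \<exists>!y. rel f x y"
    and unique_preimage: "\<And>y. mem y Y \<Longrightarrow> \<exists>!x. rel f x y"
    using f unfolding bij_in_def by simp_all
  obtain h where rel_f: "\<forall>x y. rel f x y \<longleftrightarrow> mem x X \<and> h x = y"
    and into: "h ` elts X \<subseteq> elts Y" and h: "internal_on X h"
    using functional_rel_imp_internal_on[OF pairs functional] by blast
  have "inj_on h (elts X)"
  proof (rule inj_onI)
    fix x x' assume "x \<in> elts X" "x' \<in> elts X" "h x = h x'"
    then have "rel f x (h x)" "rel f x' (h x)" "mem (h x) Y"
      using rel_f into by auto
    then show "x = x'"
      using unique_preimage by blast
  qed
  moreover have "elts Y \<subseteq> h ` elts X"
    using unique_preimage rel_f by (auto simp: image_iff) metis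
  ultimately have "bij_betw h (elts X) (elts Y)"
    using into unfolding bij_betw_def by blast
  then show ?thesis
    using rel_f h by blast
qed

lemma equinum_inI:
  assumes h: "bij_betw h (elts X) (elts Y)" and "internal_on X h"
  shows "equinum_in mem ur X Y"
proof -
  have "h ` elts X \<subseteq> elts Y"
    using bij_betw_imp_surj_on[OF h] by simp
  then obtain k where pairs: "\<forall>p. mem p k \<longrightarrow> (\<exists>u v. opair u v p \<and> mem u X \<and> mem v Y)"
    and k: "\<forall>x y. rel k x y \<longleftrightarrow> mem x X \<and> h x = y"
    using internal_on_graph[OF assms(2)] by blast
  have "bij_in mem ur k X Y"
    unfolding bij_in_def
  proof (intro conjI allI impI)
    show "\<exists>!v. rel k u v" if "mem u X" for u
      using that k by simp
    show "\<exists>!u. rel k u v" if "mem v Y" for v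
    proof -
      have "v \<in> h ` elts X"
        using that bij_betw_imp_surj_on[OF h] by simp
      then obtain u where u: "mem u X" "h u = v"
        by blast
      show ?thesis
      proof (rule ex1I)
        show "rel k u v"
          using u k by simp
        show "u' = u" if "rel k u' v" for u'
          using that u k bij_betw_imp_inj_on[OF h] by (simp add: inj_on_def)
      qed
    qed
  qed (use pairs in blast)
  then show ?thesis
    unfolding equinum_in_def by blast
qed

end

section \<open>Permutations of urelements and homogeneity\<close>

definition swap_on :: "'a set \<Rightarrow> ('a \<Rightarrow> 'a) \<Rightarrow> 'a \<Rightarrow> 'a" where
  "swap_on S h x = (if x \<in> S then h x else if x \<in> h ` S then the_inv_into S h x else x)"

lemma swap_on_involution:
  assumes "inj_on h S" and "S \<inter> h ` S = {}"
  shows "swap_on S h (swap_on S h x) = x"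
  using assms by (auto simp: swap_on_def the_inv_into_f_f f_the_inv_into_f the_inv_into_into)

lemma swap_on_permutes:
  assumes "inj_on h S" and "S \<inter> h ` S = {}" and "S \<union> h ` S \<subseteq> T"
  shows "swap_on S h permutes T"
  unfolding permutes_def
proof (intro conjI allI impI)
  show "swap_on S h x = x" if "x \<notin> T" for x
    using that assms(3) by (auto simp: swap_on_def)
  show "\<exists>!x. swap_on S h x = y" for y
    using swap_on_involution[OF assms(1,2)] by metis
qed

lemma swap_on_comp_swap_on:
  assumes g: "inj_on g C" and f: "f ` B = C" and disj: "(B \<union> C) \<inter> g ` C = {}"
  shows "x \<in> B \<Longrightarrow> (swap_on C g \<circ> swap_on B (g \<circ> f)) x = f x"
    and "x \<notin> B \<union> C \<union> g ` C \<Longrightarrow> (swap_on C g \<circ> swap_on B (g \<circ> f)) x = x"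
proof -
  assume "x \<in> B"
  then have "f x \<in> C" and "g (f x) \<notin> C"
    using f disj by auto
  then show "(swap_on C g \<circ> swap_on B (g \<circ> f)) x = f x"
    using \<open>x \<in> B\<close> g by (simp add: swap_on_def the_inv_into_f_f)
next
  assume "x \<notin> B \<union> C \<union> g ` C"
  moreover have "(g \<circ> f) ` B = g ` C"
    using f by (metis image_comp)
  ultimately show "(swap_on C g \<circ> swap_on B (g \<circ> f)) x = x"
    by (simp add: swap_on_def)
qed

context zfcu_model
begin

lemma act_in_function:
  assumes "bij_in mem ur p D D"
  shows "\<exists>\<pi>. \<forall>x y. act_in mem ur p D x y \<longleftrightarrow> \<pi> x = y"
proof -
  have "\<exists>!y. act_in mem ur p D x y" for x
  proof (cases "mem x D")
    case True
    then have "\<exists>!y. rel p x y"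
      using assms unfolding bij_in_def by blast
    then show ?thesis
      using True unfolding act_in_def by simp
  qed (simp add: act_in_def)
  then have "act_in mem ur p D x y \<longleftrightarrow> (THE y. act_in mem ur p D x y) = y" for x y
    by (metis the1_equality theI')
  then show ?thesis
    by (intro exI[of _ "\<lambda>x. THE y. act_in mem ur p D x y"]) blast
qed

definition ur_perm :: "('a \<Rightarrow> 'a) \<Rightarrow> bool" where
  "ur_perm \<pi> \<longleftrightarrow> (\<exists>D p. urset D \<and> bij_in mem ur p D D \<and> (\<forall>x. act_in mem ur p D x (\<pi> x)))"

lemma ur_perm_imp_permutes:
  assumes "ur_perm \<pi>"
  obtains D where "urset D" and "\<pi> permutes elts D" and "internal_on D \<pi>"
proof -
  obtain D p where D: "urset D" and p: "bij_in mem ur p D D"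
    and act: "\<forall>x. act_in mem ur p D x (\<pi> x)"
    using assms unfolding ur_perm_def by blast
  obtain h where rel_p: "\<forall>x y. rel p x y \<longleftrightarrow> mem x D \<and> h x = y"
    and bij: "bij_betw h (elts D) (elts D)" and h: "internal_on D h"
    using bij_in_imp_bij_betw[OF p] by blast
  have on_D: "\<pi> x = h x" if "mem x D" for x
    using act[rule_format, of x] that rel_p unfolding act_in_def by auto
  have "bij_betw \<pi> (elts D) (elts D)"
    using bij bij_betw_cong[of "elts D" \<pi> h] on_D by simp
  moreover have "\<pi> x = x" if "x \<notin> elts D" for x
    using act that unfolding act_in_def by auto
  ultimately have "\<pi> permutes elts D"
    by (rule bij_imp_permutes)
  moreover have "internal_on D \<pi>"
    using h by (rule internal_on_cong) (simp add: on_D)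
  ultimately show ?thesis
    using that D by blast
qed

lemma permutes_imp_ur_perm:
  assumes D: "urset D" and perm: "\<pi> permutes elts D" and "internal_on D \<pi>"
  shows "ur_perm \<pi>"
proof -
  obtain k where pairs: "\<forall>p. mem p k \<longrightarrow> (\<exists>u v. opair u v p \<and> mem u D \<and> mem v D)"
    and k: "\<forall>x y. rel k x y \<longleftrightarrow> mem x D \<and> \<pi> x = y"
    using internal_on_graph[OF assms(3)] permutes_image[OF perm] by blast
  have "bij_in mem ur k D D"
    unfolding bij_in_def
  proof (intro conjI allI impI)
    show "\<exists>!v. rel k u v" if "mem u D" for u
      using that k by simp
    show "\<exists>!u. rel k u v" if "mem v D" for v
    proof (rule ex1I)
      show "rel k (inv \<pi> v) v"
        using that k permutes_in_image[OF perm, of "inv \<pi> v"] permutes_inverses[OF perm] by simp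
      show "u = inv \<pi> v" if "rel k u v" for u
        using that k permutes_inverses(2)[OF perm, of u] by auto
    qed
  qed (use pairs in blast)
  moreover have "act_in mem ur k D x (\<pi> x)" for x
    using k permutes_not_in[OF perm, of x] unfolding act_in_def by auto
  ultimately show ?thesis
    unfolding ur_perm_def using D by blast
qed

lemma ur_perm_iff_permutes: "ur_perm \<pi> \<longleftrightarrow> (\<exists>D. urset D \<and> \<pi> permutes elts D \<and> internal_on D \<pi>)"
  using ur_perm_imp_permutes permutes_imp_ur_perm by metis

lemma ur_perm_internal_on:
  assumes "ur_perm \<pi>"
  shows "internal_on X \<pi>"
proof -
  obtain D where perm: "\<pi> permutes elts D" and "internal_on D \<pi>"
    using assms unfolding ur_perm_iff_permutes by blast
  obtain X1 where X1: "elts X1 = elts X \<inter> elts D"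
    using Int_exists by blast
  obtain X2 where X2: "elts X2 = elts X - elts D"
    using Diff_exists by blast
  have "internal_on X1 \<pi>"
    using \<open>internal_on D \<pi>\<close> X1 internal_on_subset by blast
  moreover have "internal_on X2 \<pi>"
    by (rule internal_on_cong[OF internal_on_id]) (use X2 permutes_not_in[OF perm] in \<open>auto simp: set_eq_iff\<close>)
  ultimately show ?thesis
    using X1 X2 internal_on_Un by blast
qed

lemma ur_perm_comp:
  assumes "ur_perm \<pi>" and "ur_perm \<sigma>"
  shows "ur_perm (\<sigma> \<circ> \<pi>)"
proof -
  obtain D1 D2 where D: "urset D1" "urset D2" and "\<pi> permutes elts D1" "\<sigma> permutes elts D2"
    using assms unfolding ur_perm_iff_permutes by blast
  moreover obtain U where U: "urset U" "elts U = elts D1 \<union> elts D2"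
    using urset_Un D by blast
  ultimately have perm: "\<pi> permutes elts U" "\<sigma> permutes elts U"
    using permutes_subset by blast+
  have "internal_on U (\<sigma> \<circ> \<pi>)"
    by (rule internal_on_comp[of U \<pi> U])
      (use ur_perm_internal_on assms permutes_image[OF perm(1)] in auto)
  then show ?thesis
    unfolding ur_perm_iff_permutes using U(1) permutes_compose[OF perm] by blast
qed

lemma ur_perm_swap_on:
  assumes X: "urset X" and Y: "urset Y" and disj: "elts X \<inter> elts Y = {}"
    and inj: "inj_on h (elts X)" and into: "h ` elts X \<subseteq> elts Y" and h: "internal_on X h"
  shows "ur_perm (swap_on (elts X) h)"
proof -
  obtain Z where Z: "\<not> ur Z" "elts Z = h ` elts X"
    using internal_on_image[OF h] by blast
  then have "urset Z"
    using Y into urset_subset by auto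
  then obtain U where U: "urset U" "elts U = elts X \<union> elts Z"
    using urset_Un X by blast
  have "swap_on (elts X) h permutes elts U"
    using inj disj into U(2) Z(2) by (intro swap_on_permutes) auto
  moreover have "internal_on X (swap_on (elts X) h)"
    using h by (rule internal_on_cong) (simp add: swap_on_def)
  moreover have "internal_on Z (swap_on (elts X) h)"
    using internal_on_inv[OF h inj Z(2)] by (rule internal_on_cong) (use Z(2) disj into in \<open>auto simp: swap_on_def\<close>)
  ultimately show ?thesis
    unfolding ur_perm_iff_permutes using U internal_on_Un by blast
qed

lemma ur_perm_override_on:
  assumes \<pi>: "ur_perm \<pi>" and X: "urset X" and Y: "urset Y" and XY: "\<pi> ` elts X = elts Y"
    and h_bij: "bij_betw h (elts X) (elts Y)" and h: "internal_on X h"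
  shows "ur_perm (override_on \<pi> h (elts X))"
proof -
  obtain D where D: "urset D" and perm: "\<pi> permutes elts D"
    using \<pi> unfolding ur_perm_iff_permutes by blast
  obtain U where U: "urset U" "elts U = elts D \<union> elts X \<union> elts Y"
    using urset_Un[OF D X] urset_Un Y by metis
  have "bij_betw \<pi> (- elts X) (- elts Y)"
    using permutes_bij[OF perm] XY bij_image_Compl_eq
    by (metis bij_betw_subset bij_betw_imp_surj_on subset_UNIV)
  then have "bij_betw (override_on \<pi> h (elts X)) (elts X \<union> - elts X) (elts Y \<union> - elts Y)"
    unfolding override_on_def using h_bij by (intro bij_betw_disjoint_Un) auto
  then have "bij (override_on \<pi> h (elts X))"
    by simp
  then have "override_on \<pi> h (elts X) permutes elts U"
    using permutes_not_in[OF perm] U(2) unfolding permutes_def bij_iff override_on_def by auto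
  moreover obtain W where W: "elts W = elts U - elts X"
    using Diff_exists by blast
  have "internal_on X (override_on \<pi> h (elts X))"
    using h by (rule internal_on_cong) simp
  moreover have "internal_on W (override_on \<pi> h (elts X))"
    using ur_perm_internal_on[OF \<pi>] by (rule internal_on_cong) (use W in \<open>auto simp: set_eq_iff override_on_def\<close>)
  ultimately show ?thesis
    unfolding ur_perm_iff_permutes using U W internal_on_Un[of X _ W U] by blast
qed

lemma ur_perm_iff_act:
  "ur_perm \<pi> \<longleftrightarrow> (\<exists>D p. urset D \<and> bij_in mem ur p D D \<and> (\<forall>x y. act_in mem ur p D x y \<longleftrightarrow> \<pi> x = y))"
proof
  assume "ur_perm \<pi>"
  then obtain D p where D: "urset D" "bij_in mem ur p D D" and act: "\<forall>x. act_in mem ur p D x (\<pi> x)"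
    unfolding ur_perm_def by blast
  obtain \<pi>' where \<pi>': "\<forall>x y. act_in mem ur p D x y \<longleftrightarrow> \<pi>' x = y"
    using act_in_function[OF D(2)] by blast
  moreover have "\<pi>' x = \<pi> x" for x
    using act \<pi>' by blast
  ultimately show "\<exists>D p. urset D \<and> bij_in mem ur p D D \<and> (\<forall>x y. act_in mem ur p D x y \<longleftrightarrow> \<pi> x = y)"
    using D by auto
qed (auto simp: ur_perm_def)

lemma homogeneous_over_iff:
  "homogeneous_over mem ur A \<longleftrightarrow>
     (\<forall>B C. urset B \<and> urset C \<and> elts B \<inter> elts A = {} \<and> elts C \<inter> elts A = {} \<and> equinum_in mem ur B C
        \<longrightarrow> (\<exists>\<pi>. ur_perm \<pi> \<and> (\<forall>a\<in>elts A. \<pi> a = a) \<and> \<pi> ` elts B = elts C))"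
proof -
  have image: "\<pi> ` elts B = elts C \<longleftrightarrow> (\<forall>c. mem c C \<longleftrightarrow> (\<exists>b. mem b B \<and> \<pi> b = c))" for \<pi> B C
    by (auto simp: set_eq_iff image_iff) metis
  have "(\<exists>D p. urset D \<and> bij_in mem ur p D D \<and> (\<forall>a. mem a A \<longrightarrow> act_in mem ur p D a a) \<and>
           (\<forall>c. mem c C \<longleftrightarrow> (\<exists>b. mem b B \<and> act_in mem ur p D b c)))
        \<longleftrightarrow> (\<exists>\<pi>. ur_perm \<pi> \<and> (\<forall>a\<in>elts A. \<pi> a = a) \<and> \<pi> ` elts B = elts C)" for B C
    unfolding ur_perm_iff_act image
  proof
    assume "\<exists>D p. urset D \<and> bij_in mem ur p D D \<and> (\<forall>a. mem a A \<longrightarrow> act_in mem ur p D a a) \<and>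
           (\<forall>c. mem c C \<longleftrightarrow> (\<exists>b. mem b B \<and> act_in mem ur p D b c))"
    then obtain D p where D: "urset D" "bij_in mem ur p D D"
      and fixA: "\<forall>a. mem a A \<longrightarrow> act_in mem ur p D a a"
      and BC: "\<forall>c. mem c C \<longleftrightarrow> (\<exists>b. mem b B \<and> act_in mem ur p D b c)"
      by blast
    obtain \<pi> where \<pi>: "\<forall>x y. act_in mem ur p D x y \<longleftrightarrow> \<pi> x = y"
      using act_in_function[OF D(2)] by blast
    have "\<forall>a\<in>elts A. \<pi> a = a" and "\<forall>c. mem c C \<longleftrightarrow> (\<exists>b. mem b B \<and> \<pi> b = c)"
      using fixA BC \<pi> by simp_all
    then show "\<exists>\<pi>. (\<exists>D p. urset D \<and> bij_in mem ur p D D \<and> (\<forall>x y. act_in mem ur p D x y \<longleftrightarrow> \<pi> x = y))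
        \<and> (\<forall>a\<in>elts A. \<pi> a = a) \<and> (\<forall>c. mem c C \<longleftrightarrow> (\<exists>b. mem b B \<and> \<pi> b = c))"
      using D \<pi> by blast
  next
    assume "\<exists>\<pi>. (\<exists>D p. urset D \<and> bij_in mem ur p D D \<and> (\<forall>x y. act_in mem ur p D x y \<longleftrightarrow> \<pi> x = y))
        \<and> (\<forall>a\<in>elts A. \<pi> a = a) \<and> (\<forall>c. mem c C \<longleftrightarrow> (\<exists>b. mem b B \<and> \<pi> b = c))"
    then obtain \<pi> D p where D: "urset D" "bij_in mem ur p D D"
      and \<pi>: "\<forall>x y. act_in mem ur p D x y \<longleftrightarrow> \<pi> x = y"
      and fixA: "\<forall>a\<in>elts A. \<pi> a = a" and BC: "\<forall>c. mem c C \<longleftrightarrow> (\<exists>b. mem b B \<and> \<pi> b = c)"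
      by blast
    have "\<forall>a. mem a A \<longrightarrow> act_in mem ur p D a a" and
      "\<forall>c. mem c C \<longleftrightarrow> (\<exists>b. mem b B \<and> act_in mem ur p D b c)"
      using fixA BC \<pi> by simp_all
    then show "\<exists>D p. urset D \<and> bij_in mem ur p D D \<and> (\<forall>a. mem a A \<longrightarrow> act_in mem ur p D a a) \<and>
           (\<forall>c. mem c C \<longleftrightarrow> (\<exists>b. mem b B \<and> act_in mem ur p D b c))"
      using D by blast
  qed
  moreover have "(\<forall>u. mem u B \<or> mem u C \<longrightarrow> \<not> mem u A) \<longleftrightarrow> elts B \<inter> elts A = {} \<and> elts C \<inter> elts A = {}"
    for B C by auto
  ultimately show ?thesis
    unfolding homogeneous_over_def by (simp only: conj_assoc)
qed

lemma homogeneous_over_mono: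
  assumes hom: "homogeneous_over mem ur A" and A': "urset A'" and sub: "elts A \<subseteq> elts A'"
  shows "homogeneous_over mem ur A'"
  unfolding homogeneous_over_iff
proof (intro allI impI, elim conjE)
  fix B C
  assume B: "urset B" and C: "urset C" and BA': "elts B \<inter> elts A' = {}" and CA': "elts C \<inter> elts A' = {}"
    and "equinum_in mem ur B C"
  then obtain f where f: "bij_betw f (elts B) (elts C)" "internal_on B f"
    unfolding equinum_in_def using bij_in_imp_bij_betw by blast
  obtain F where F: "urset F" "elts F = elts A' - elts A"
    using Diff_exists A' urset_subset by (metis Diff_subset)
  obtain B1 where B1: "urset B1" "elts B1 = elts B \<union> elts F"
    using urset_Un B F(1) by blast
  obtain C1 where C1: "urset C1" "elts C1 = elts C \<union> elts F"
    using urset_Un C F(1) by blast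
  define g where "g = override_on (\<lambda>x. x) f (elts B)"
  have "bij_betw g (elts B1) (elts C1)"
    unfolding g_def override_on_def B1(2) C1(2)
    using f(1) BA' CA' F(2) by (intro bij_betw_disjoint_Un) (auto simp: bij_betw_def)
  moreover have "internal_on B1 g"
  proof (rule internal_on_Un)
    show "internal_on B g"
      using f(2) by (rule internal_on_cong) (simp add: g_def)
    show "internal_on F g"
      using internal_on_id by (rule internal_on_cong) (use F(2) BA' in \<open>auto simp: g_def override_on_def set_eq_iff\<close>)
  qed (rule B1(2))
  ultimately have "equinum_in mem ur B1 C1"
    by (rule equinum_inI)
  moreover have "elts B1 \<inter> elts A = {}" and "elts C1 \<inter> elts A = {}"
    using B1(2) C1(2) F(2) BA' CA' sub by auto
  ultimately obtain \<pi> where \<pi>: "ur_perm \<pi>" "\<forall>a\<in>elts A. \<pi> a = a" "\<pi> ` elts B1 = elts C1"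
    using hom B1(1) C1(1) unfolding homogeneous_over_iff by blast
  have "ur_perm (override_on \<pi> g (elts B1))"
    using \<pi>(1) B1(1) C1(1) \<pi>(3) \<open>bij_betw g (elts B1) (elts C1)\<close> \<open>internal_on B1 g\<close>
    by (rule ur_perm_override_on)
  moreover have "\<forall>a\<in>elts A'. override_on \<pi> g (elts B1) a = a"
    using \<pi>(2) B1(2) F(2) BA' by (auto simp: override_on_def g_def)
  moreover have "override_on \<pi> g (elts B1) ` elts B = elts C"
    using B1(2) f(1) by (auto simp: override_on_def g_def bij_betw_def)
  ultimately show "\<exists>\<pi>. ur_perm \<pi> \<and> (\<forall>a\<in>elts A'. \<pi> a = a) \<and> \<pi> ` elts B = elts C"
    by blast
qed

section \<open>Sets of urelements with room\<close>

definition inj_in :: "'a \<Rightarrow> 'a \<Rightarrow> 'a \<Rightarrow> bool" where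
  "inj_in g X Y \<longleftrightarrow>
     (\<forall>p. mem p g \<longrightarrow> (\<exists>u v. opair u v p \<and> mem u X \<and> mem v Y)) \<and>
     (\<forall>u. mem u X \<longrightarrow> (\<exists>v. rel g u v)) \<and>
     (\<forall>u v u' v'. rel g u v \<and> rel g u' v' \<longrightarrow> (u = u' \<longleftrightarrow> v = v'))"

definition dinj :: "nat \<Rightarrow> nat \<Rightarrow> nat \<Rightarrow> dfm" where
  "dinj g X Y = DConj
     (DAll (DImp (DMem 0 (Suc g))
        (DEx (DEx (DConj (dopair 1 0 2) (DConj (DMem 1 (X + 3)) (DMem 0 (Y + 3))))))))
     (DConj (DAll (DImp (DMem 0 (Suc X)) (DEx (drel (g + 2) 1 0))))
       (DAll (DAll (DAll (DAll (DImp (DConj (drel (g + 4) 3 2) (drel (g + 4) 1 0))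
          (DIff (DEq 3 1) (DEq 2 0))))))))"

lemma dsat_dinj [simp]: "dsat mem ur e (dinj g X Y) = inj_in (e g) (e X) (e Y)"
  unfolding dinj_def inj_in_def by (simp add: numeral_eq_Suc)

definition lepoll_in :: "'a \<Rightarrow> 'a \<Rightarrow> bool" where
  "lepoll_in X Y \<longleftrightarrow> (\<exists>g. inj_in g X Y)"

lemma lepoll_in_iff:
  "lepoll_in X Y \<longleftrightarrow> (\<exists>h. inj_on h (elts X) \<and> h ` elts X \<subseteq> elts Y \<and> internal_on X h)"
proof
  assume "lepoll_in X Y"
  then obtain g where g: "inj_in g X Y"
    unfolding lepoll_in_def by blast
  have pairs: "\<forall>p. mem p g \<longrightarrow> (\<exists>u v. opair u v p \<and> mem u X \<and> mem v Y)"
    using g unfolding inj_in_def by blast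
  have inj: "rel g u v \<Longrightarrow> rel g u' v' \<Longrightarrow> u = u' \<longleftrightarrow> v = v'" for u v u' v'
    using g unfolding inj_in_def by blast
  have "mem x X \<Longrightarrow> \<exists>!y. rel g x y" for x
    using g inj unfolding inj_in_def by metis
  then obtain h where rel_g: "\<forall>x y. rel g x y \<longleftrightarrow> mem x X \<and> h x = y"
    and "h ` elts X \<subseteq> elts Y" and "internal_on X h"
    using functional_rel_imp_internal_on[OF pairs] by blast
  moreover have "inj_on h (elts X)"
    using rel_g inj by (intro inj_onI) simp
  ultimately show "\<exists>h. inj_on h (elts X) \<and> h ` elts X \<subseteq> elts Y \<and> internal_on X h"
    by blast
next
  assume "\<exists>h. inj_on h (elts X) \<and> h ` elts X \<subseteq> elts Y \<and> internal_on X h"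
  then obtain h where inj: "inj_on h (elts X)" and into: "h ` elts X \<subseteq> elts Y"
    and h: "internal_on X h"
    by blast
  obtain k where pairs: "\<forall>p. mem p k \<longrightarrow> (\<exists>u v. opair u v p \<and> mem u X \<and> mem v Y)"
    and k: "\<forall>x y. rel k x y \<longleftrightarrow> mem x X \<and> h x = y"
    using internal_on_graph[OF h into] by blast
  have "inj_in k X Y"
    unfolding inj_in_def
  proof (intro conjI allI impI)
    show "\<exists>v. rel k u v" if "mem u X" for u
      using that k by simp
    show "u = u' \<longleftrightarrow> v = v'" if "rel k u v \<and> rel k u' v'" for u v u' v'
      using that k inj by (auto simp: inj_on_def)
  qed (use pairs in blast)
  then show "lepoll_in X Y"
    unfolding lepoll_in_def by blast
qed

lemma lepoll_in_trans:
  assumes "lepoll_in X Y" and "lepoll_in Y Z"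
  shows "lepoll_in X Z"
proof -
  obtain h where h: "inj_on h (elts X)" "h ` elts X \<subseteq> elts Y" "internal_on X h"
    using assms(1) unfolding lepoll_in_iff by blast
  obtain g where g: "inj_on g (elts Y)" "g ` elts Y \<subseteq> elts Z" "internal_on Y g"
    using assms(2) unfolding lepoll_in_iff by blast
  have "inj_on (g \<circ> h) (elts X)"
    using h(1,2) g(1) inj_on_subset by (blast intro: comp_inj_on)
  moreover have "(g \<circ> h) ` elts X \<subseteq> elts Z"
    using h(2) g(2) by auto
  moreover have "internal_on X (g \<circ> h)"
    using h(3) g(3) h(2) by (rule internal_on_comp)
  ultimately show ?thesis
    unfolding lepoll_in_iff by blast
qed

definition has_room :: "'a \<Rightarrow> bool" where
  "has_room A \<longleftrightarrow> (\<forall>S. urset S \<and> elts S \<inter> elts A = {} \<longrightarrow>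
     (\<exists>E. urset E \<and> elts E \<inter> (elts A \<union> elts S) = {} \<and> lepoll_in S E))"

lemma has_room_imp_homogeneous_over:
  assumes room: "has_room A"
  shows "homogeneous_over mem ur A"
  unfolding homogeneous_over_iff
proof (intro allI impI, elim conjE)
  fix B C
  assume B: "urset B" and C: "urset C" and BA: "elts B \<inter> elts A = {}" and CA: "elts C \<inter> elts A = {}"
    and "equinum_in mem ur B C"
  then obtain f where f_bij: "bij_betw f (elts B) (elts C)" and f: "internal_on B f"
    unfolding equinum_in_def using bij_in_imp_bij_betw by blast
  obtain S where S: "urset S" "elts S = elts B \<union> elts C"
    using urset_Un B C by blast
  then obtain E where E: "urset E" "elts E \<inter> (elts A \<union> elts S) = {}" and "lepoll_in S E"
    using room BA CA unfolding has_room_def by blast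
  then obtain g where g_inj: "inj_on g (elts S)" and g_into: "g ` elts S \<subseteq> elts E" and g: "internal_on S g"
    unfolding lepoll_in_iff by blast
  have fB: "f ` elts B = elts C"
    using f_bij by (simp add: bij_betw_def)
  have gC: "inj_on g (elts C)" "g ` elts C \<subseteq> elts E"
    using inj_on_subset[OF g_inj] g_into S(2) by auto
  have "ur_perm (swap_on (elts B) (g \<circ> f))"
  proof (rule ur_perm_swap_on[OF B E(1)])
    show "inj_on (g \<circ> f) (elts B)"
      using bij_betw_imp_inj_on[OF f_bij] gC(1) fB by (simp add: comp_inj_on)
    show "internal_on B (g \<circ> f)"
      using f g fB S(2) by (intro internal_on_comp) auto
    show "(g \<circ> f) ` elts B \<subseteq> elts E"
      using gC(2) fB by (metis image_comp)
  qed (use E(2) S(2) in auto)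
  moreover have "ur_perm (swap_on (elts C) g)"
    using C E(1) _ gC internal_on_subset[OF g] by (rule ur_perm_swap_on) (use E(2) S(2) in auto)
  ultimately have "ur_perm (swap_on (elts C) g \<circ> swap_on (elts B) (g \<circ> f))"
    by (rule ur_perm_comp)
  moreover have "(elts B \<union> elts C) \<inter> g ` elts C = {}"
    using E(2) S(2) gC(2) by auto
  note swaps = swap_on_comp_swap_on[OF gC(1) fB this]
  have "\<forall>a\<in>elts A. (swap_on (elts C) g \<circ> swap_on (elts B) (g \<circ> f)) a = a"
    using BA CA E(2) gC(2) by (intro ballI swaps(2)) auto
  moreover have "(swap_on (elts C) g \<circ> swap_on (elts B) (g \<circ> f)) ` elts B = f ` elts B"
    by (rule image_cong[OF refl swaps(1)])
  then have "(swap_on (elts C) g \<circ> swap_on (elts B) (g \<circ> f)) ` elts B = elts C"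
    using fB by simp
  ultimately show "\<exists>\<pi>. ur_perm \<pi> \<and> (\<forall>a\<in>elts A. \<pi> a = a) \<and> \<pi> ` elts B = elts C"
    by blast
qed

section \<open>Comparing well-orders\<close>

definition iso_in :: "'a \<Rightarrow> 'a \<Rightarrow> 'a \<Rightarrow> 'a \<Rightarrow> 'a \<Rightarrow> 'a \<Rightarrow> 'a \<Rightarrow> bool" where
  "iso_in h W r x S R y \<longleftrightarrow>
     (\<forall>u v. rel h u v \<longrightarrow> mem u W \<and> rel r u x \<and> mem v S \<and> rel R v y) \<and>
     (\<forall>u. mem u W \<and> rel r u x \<longrightarrow> (\<exists>v. rel h u v)) \<and>
     (\<forall>v. mem v S \<and> rel R v y \<longrightarrow> (\<exists>u. rel h u v)) \<and>
     (\<forall>u v u' v'. rel h u v \<and> rel h u' v' \<longrightarrow> (rel r u u' \<longleftrightarrow> rel R v v'))"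

definition diso :: "nat \<Rightarrow> nat \<Rightarrow> nat \<Rightarrow> nat \<Rightarrow> nat \<Rightarrow> nat \<Rightarrow> nat \<Rightarrow> dfm" where
  "diso h W r x S R y = DConj
     (DAll (DAll (DImp (drel (h + 2) 1 0)
        (DConj (DMem 1 (W + 2)) (DConj (drel (r + 2) 1 (x + 2))
          (DConj (DMem 0 (S + 2)) (drel (R + 2) 0 (y + 2))))))))
     (DConj (DAll (DImp (DConj (DMem 0 (W + 1)) (drel (r + 1) 0 (x + 1))) (DEx (drel (h + 2) 1 0))))
     (DConj (DAll (DImp (DConj (DMem 0 (S + 1)) (drel (R + 1) 0 (y + 1))) (DEx (drel (h + 2) 0 1))))
       (DAll (DAll (DAll (DAll (DImp (DConj (drel (h + 4) 3 2) (drel (h + 4) 1 0))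
          (DIff (drel (r + 4) 3 1) (drel (R + 4) 2 0)))))))))"

lemma dsat_diso [simp]:
  "dsat mem ur e (diso h W r x S R y) = iso_in (e h) (e W) (e r) (e x) (e S) (e R) (e y)"
  unfolding diso_def iso_in_def by (simp add: numeral_eq_Suc)

abbreviation "wo \<equiv> wellorders_in mem ur"

lemma wo_irrefl: "wo r W \<Longrightarrow> mem u W \<Longrightarrow> \<not> rel r u u"
  unfolding wellorders_in_def by blast

lemma wo_trans:
  "wo r W \<Longrightarrow> mem u W \<Longrightarrow> mem v W \<Longrightarrow> mem w W \<Longrightarrow> rel r u v \<Longrightarrow> rel r v w \<Longrightarrow> rel r u w"
  unfolding wellorders_in_def by blast

lemma wo_linear: "wo r W \<Longrightarrow> mem u W \<Longrightarrow> mem v W \<Longrightarrow> rel r u v \<or> u = v \<or> rel r v u"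
  unfolding wellorders_in_def by blast

lemma wo_subset:
  assumes r: "wo r W" and sub: "elts V \<subseteq> elts W"
  shows "wo r V"
  unfolding wellorders_in_def
proof (intro conjI allI impI)
  show "\<not> rel r u u" if "mem u V" for u
    using that sub wo_irrefl[OF r] by blast
  show "rel r u w" if "mem u V \<and> mem v V \<and> mem w V \<and> rel r u v \<and> rel r v w" for u v w
    using that sub wo_trans[OF r] by blast
  show "rel r u v \<or> u = v \<or> rel r v u" if "mem u V \<and> mem v V" for u v
    using that sub wo_linear[OF r] by blast
  show "\<exists>m. mem m s \<and> (\<forall>u. mem u s \<longrightarrow> \<not> rel r u m)"
    if "(\<forall>u. mem u s \<longrightarrow> mem u V) \<and> (\<exists>u. mem u s)" for s
    using that sub r unfolding wellorders_in_def by blast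
qed

lemma wo_minimal:
  assumes r: "wo r W" and P: "\<And>x. dsat mem ur (x ## e) \<phi> \<longleftrightarrow> P x" and "mem x W" and "P x"
  shows "\<exists>m. mem m W \<and> P m \<and> (\<forall>u. mem u W \<and> rel r u m \<longrightarrow> \<not> P u)"
proof -
  have least: "\<forall>s. (\<forall>u. mem u s \<longrightarrow> mem u W) \<and> (\<exists>u. mem u s) \<longrightarrow>
      (\<exists>m. mem m s \<and> (\<forall>u. mem u s \<longrightarrow> \<not> rel r u m))"
    using r unfolding wellorders_in_def by (elim conjE) assumption
  obtain s where s: "elts s = {z \<in> elts W. P z}"
    using separation[of W e \<phi>] unfolding P by blast
  then have "(\<forall>u. mem u s \<longrightarrow> mem u W) \<and> (\<exists>u. mem u s)"
    using assms(3,4) by auto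
  then obtain m where "mem m s" "\<forall>u. mem u s \<longrightarrow> \<not> rel r u m"
    using least by blast
  then show ?thesis
    using s by auto
qed

lemma segment_exists: "\<exists>I. \<not> ur I \<and> elts I = {u \<in> elts W. rel r u x}"
proof -
  have "dsat mem ur (u ## r ## x ## undefined) (drel 1 0 2) \<longleftrightarrow> rel r u x" for u
    by simp
  then show ?thesis
    using separation[of W "r ## x ## undefined" "drel 1 0 2"] by simp
qed

context
  fixes W r S R
  assumes W: "wo r W" and S: "wo R S"
begin

abbreviation iso :: "'a \<Rightarrow> 'a \<Rightarrow> 'a \<Rightarrow> bool" where
  "iso h x y \<equiv> iso_in h W r x S R y"

lemma iso_field: "iso h x y \<Longrightarrow> rel h u v \<Longrightarrow> mem u W \<and> rel r u x \<and> mem v S \<and> rel R v y"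
  unfolding iso_in_def by blast

lemma iso_dom: "iso h x y \<Longrightarrow> mem u W \<Longrightarrow> rel r u x \<Longrightarrow> \<exists>v. rel h u v"
  unfolding iso_in_def by blast

lemma iso_ran: "iso h x y \<Longrightarrow> mem v S \<Longrightarrow> rel R v y \<Longrightarrow> \<exists>u. rel h u v"
  unfolding iso_in_def by blast

lemma iso_mono: "iso h x y \<Longrightarrow> rel h u v \<Longrightarrow> rel h u' v' \<Longrightarrow> rel r u u' \<longleftrightarrow> rel R v v'"
  unfolding iso_in_def by blast

lemma iso_injective:
  assumes h: "iso h x y" and "rel h u v" and "rel h u' v"
  shows "u = u'"
proof -
  have "mem u W" "mem u' W" "mem v S"
    using iso_field[OF h] assms(2,3) by blast+
  moreover have "\<not> rel r u u'" and "\<not> rel r u' u"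
    using iso_mono[OF h] assms(2,3) wo_irrefl[OF S \<open>mem v S\<close>] by blast+
  ultimately show ?thesis
    using wo_linear[OF W] by blast
qed

lemma iso_least_disagreement:
  assumes h1: "iso h1 x y1" and h2: "iso h2 x y2" and "mem y2 S"
    and u0: "rel h1 u0 v1" "rel h2 u0 v2" "rel R v1 v2"
    and below: "\<forall>u. mem u W \<and> rel r u u0 \<longrightarrow> (\<forall>w w'. rel h1 u w \<and> rel h2 u w' \<longrightarrow> w = w')"
  shows False
proof -
  have "mem v1 S" "mem v2 S" "rel R v2 y2" "mem u0 W"
    using iso_field[OF h1] iso_field[OF h2] u0 by blast+
  then have "rel R v1 y2"
    using wo_trans[OF S] \<open>mem y2 S\<close> u0(3) by blast
  then obtain u' where u': "rel h2 u' v1"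
    using iso_ran[OF h2] \<open>mem v1 S\<close> by blast
  then have "mem u' W" "rel r u' x"
    using iso_field[OF h2] by blast+
  have "rel r u' u0"
    using iso_mono[OF h2 u' u0(2)] u0(3) by simp
  obtain w where w: "rel h1 u' w"
    using iso_dom[OF h1 \<open>mem u' W\<close> \<open>rel r u' x\<close>] by blast
  then have "w = v1"
    using below \<open>mem u' W\<close> \<open>rel r u' u0\<close> u' by blast
  then have "u' = u0"
    using iso_injective[OF h1] w u0(1) by blast
  then show False
    using \<open>rel r u' u0\<close> wo_irrefl[OF W \<open>mem u0 W\<close>] by blast
qed

lemma iso_agree:
  assumes h: "iso h x y" and h': "iso h' x y'" and "mem y S" and "mem y' S"
    and "rel h u w" and "rel h' u w'"
  shows "w = w'"
proof (rule ccontr)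
  assume "w \<noteq> w'"
  define P where "P u \<longleftrightarrow> (\<exists>w w'. rel h u w \<and> rel h' u w' \<and> w \<noteq> w')" for u
  have P_dsat: "dsat mem ur (u ## h ## h' ## undefined)
      (DEx (DEx (DConj (drel 3 2 1) (DConj (drel 4 2 0) (DNeg (DEq 1 0)))))) \<longleftrightarrow> P u" for u
    unfolding P_def by simp
  have "mem u W" and "P u"
    using assms(5,6) \<open>w \<noteq> w'\<close> iso_field[OF h] unfolding P_def by blast+
  then obtain u0 where "mem u0 W" "P u0" and "\<forall>u. mem u W \<and> rel r u u0 \<longrightarrow> \<not> P u"
    using wo_minimal[OF W P_dsat] by blast
  then obtain v v' where u0: "mem u0 W" "rel h u0 v" "rel h' u0 v'" "v \<noteq> v'"
    and below: "\<forall>u. mem u W \<and> rel r u u0 \<longrightarrow> (\<forall>w w'. rel h u w \<and> rel h' u w' \<longrightarrow> w = w')"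
    unfolding P_def by blast
  have "mem v S" "mem v' S"
    using iso_field[OF h] iso_field[OF h'] u0 by blast+
  then consider "rel R v v'" | "rel R v' v"
    using wo_linear[OF S] u0(4) by blast
  then show False
  proof cases
    case 1
    show False
      by (rule iso_least_disagreement[OF h h' \<open>mem y' S\<close> u0(2,3) 1 below])
  next
    case 2
    have "\<forall>u. mem u W \<and> rel r u u0 \<longrightarrow> (\<forall>w w'. rel h' u w \<and> rel h u w' \<longrightarrow> w = w')"
      using below by blast
    then show False
      by (rule iso_least_disagreement[OF h' h \<open>mem y S\<close> u0(3,2) 2])
  qed
qed

lemma iso_unique:
  assumes h: "iso h x y" and h': "iso h' x y'" and y: "mem y S" and y': "mem y' S"
  shows "y = y'"
proof -
  have False if h1: "iso h1 x y1" and h2: "iso h2 x y2" and y1: "mem y1 S" and y2: "mem y2 S"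
    and lt: "rel R y1 y2" for h1 h2 y1 y2
  proof -
    obtain u where u: "rel h2 u y1"
      using iso_ran[OF h2 y1 lt] by blast
    then obtain w where w: "rel h1 u w"
      using iso_field[OF h2] iso_dom[OF h1] by blast
    have "w = y1"
      by (rule iso_agree[OF h1 h2 y1 y2 w u])
    then show False
      using iso_field[OF h1 w] wo_irrefl[OF S y1] by blast
  qed
  then show ?thesis
    using wo_linear[OF S y y'] h h' y y' by blast
qed

lemma iso_restrict:
  assumes h: "iso h x y" and x: "mem x W" and y: "mem y S" and hx': "rel h x' y'"
  shows "\<exists>h'. iso h' x' y'"
proof -
  have x': "mem x' W" "rel r x' x" "mem y' S" "rel R y' y"
    using iso_field[OF h hx'] by simp_all
  obtain g where g: "\<forall>a b. rel g a b \<longleftrightarrow> mem a W \<and> mem b S \<and> rel h a b \<and> rel r a x'"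
    using relation_exists[of W S "h ## r ## x' ## undefined" "DConj (drel 2 1 0) (drel 3 1 4)"
        "\<lambda>a b. rel h a b \<and> rel r a x'"] by auto
  have "iso g x' y'"
    unfolding iso_in_def
  proof (intro conjI; intro allI impI)
    fix u v
    assume "rel g u v"
    then have "mem u W" "mem v S" "rel h u v" "rel r u x'"
      using g by simp_all
    then show "mem u W \<and> rel r u x' \<and> mem v S \<and> rel R v y'"
      using iso_mono[OF h \<open>rel h u v\<close> hx'] by simp
  next
    fix u
    assume u: "mem u W \<and> rel r u x'"
    then have "rel r u x"
      using wo_trans[OF W _ x'(1) x] x'(2) u by blast
    then obtain v where v: "rel h u v"
      using u iso_dom[OF h] by blast
    then have "rel g u v"
      using u g iso_field[OF h v] by simp
    then show "\<exists>v. rel g u v" ..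
  next
    fix v
    assume v: "mem v S \<and> rel R v y'"
    then have "rel R v y"
      using wo_trans[OF S _ x'(3) y] x'(4) v by blast
    then obtain u where u: "rel h u v"
      using v iso_ran[OF h] by blast
    then have "rel g u v"
      using iso_field[OF h u] iso_mono[OF h u hx'] v g by simp
    then show "\<exists>u. rel g u v" ..
  next
    fix u v u' v'
    assume "rel g u v \<and> rel g u' v'"
    then show "rel r u u' \<longleftrightarrow> rel R v v'"
      using g iso_mono[OF h] by simp
  qed
  then show ?thesis
    by blast
qed

abbreviation seg_iso :: "'a \<Rightarrow> 'a \<Rightarrow> bool" where
  "seg_iso x y \<equiv> mem x W \<and> mem y S \<and> (\<exists>h. iso h x y)"

lemma seg_iso_functional: "seg_iso x y \<Longrightarrow> seg_iso x y' \<Longrightarrow> y = y'"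
  using iso_unique by blast

lemma seg_iso_below:
  assumes "seg_iso x y" and "mem x' W" and "rel r x' x"
  shows "\<exists>y'. seg_iso x' y' \<and> rel R y' y"
proof -
  obtain h where h: "iso h x y"
    using assms(1) by blast
  obtain y' where "rel h x' y'"
    using iso_dom[OF h assms(2,3)] by blast
  then show ?thesis
    using iso_restrict[OF h _ _ \<open>rel h x' y'\<close>] iso_field[OF h \<open>rel h x' y'\<close>] assms(1,2) by blast
qed

lemma seg_iso_below_ran:
  assumes "seg_iso x y" and "mem y' S" and "rel R y' y"
  shows "\<exists>x'. seg_iso x' y' \<and> rel r x' x"
proof -
  obtain h where h: "iso h x y"
    using assms(1) by blast
  obtain x' where "rel h x' y'"
    using iso_ran[OF h assms(2,3)] by blast
  then show ?thesis
    using iso_restrict[OF h _ _ \<open>rel h x' y'\<close>] iso_field[OF h \<open>rel h x' y'\<close>] assms(1,2) by blast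
qed

lemma seg_iso_mono:
  assumes "seg_iso x y" and "seg_iso x' y'" and "rel r x' x"
  shows "rel R y' y"
  using seg_iso_below[OF assms(1) _ assms(3)] seg_iso_functional assms(2) by blast

lemma seg_iso_injective:
  assumes "seg_iso x y" and "seg_iso x' y"
  shows "x = x'"
  using wo_linear[OF W, of x x'] seg_iso_mono[OF assms] seg_iso_mono[OF assms(2,1)] assms
    wo_irrefl[OF S] by blast

lemma seg_iso_reflect:
  assumes "seg_iso x y" and "seg_iso x' y'" and "rel R y' y"
  shows "rel r x' x"
proof -
  have "\<not> rel R y y'"
    using assms wo_irrefl[OF S] wo_trans[OF S, of y y' y] by blast
  then show ?thesis
    using wo_linear[OF W, of x x'] seg_iso_mono[OF assms(2,1)] seg_iso_functional assms
      wo_irrefl[OF S] by blast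
qed

lemma seg_iso_graph:
  "\<exists>F. (\<forall>p. mem p F \<longrightarrow> (\<exists>x y. opair x y p \<and> mem x W \<and> mem y S)) \<and> (\<forall>x y. rel F x y \<longleftrightarrow> seg_iso x y)"
  using relation_exists[of W S "W ## r ## S ## R ## undefined" "DEx (diso 0 3 4 2 5 6 1)"
      "\<lambda>x y. \<exists>h. iso h x y"] by auto

lemma seg_iso_least_unmatched:
  assumes "mem x1 W" and "\<not> (\<exists>y. seg_iso x1 y)"
  obtains x0 where "mem x0 W" and "\<not> (\<exists>y. seg_iso x0 y)"
    and "\<forall>u. mem u W \<and> rel r u x0 \<longrightarrow> (\<exists>y. seg_iso u y)"
    and "\<forall>x y. seg_iso x y \<longrightarrow> rel r x x0"
proof -
  obtain F where F: "\<forall>x y. rel F x y \<longleftrightarrow> seg_iso x y"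
    using seg_iso_graph by blast
  have P: "dsat mem ur (x ## F ## undefined) (DNeg (DEx (drel 2 1 0))) \<longleftrightarrow> \<not> (\<exists>y. seg_iso x y)" for x
    by (simp add: F)
  have "\<exists>m. mem m W \<and> \<not> (\<exists>y. seg_iso m y) \<and> (\<forall>u. mem u W \<and> rel r u m \<longrightarrow> \<not> \<not> (\<exists>y. seg_iso u y))"
    by (rule wo_minimal[OF W P assms])
  then obtain x0 where x0: "mem x0 W" "\<not> (\<exists>y. seg_iso x0 y)"
    and below: "\<forall>u. mem u W \<and> rel r u x0 \<longrightarrow> (\<exists>y. seg_iso u y)"
    by (simp only: not_not) blast
  have "rel r x x0" if "seg_iso x y" for x y
  proof -
    have "x \<noteq> x0"
      using that x0(2) by blast
    moreover have "\<not> rel r x0 x"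
      using seg_iso_below[OF that x0(1)] x0(2) by blast
    ultimately show ?thesis
      using wo_linear[OF W, of x x0] that x0(1) by blast
  qed
  then show ?thesis
    using that x0 below by blast
qed

lemma seg_iso_least_unmatched_ran:
  assumes "mem y1 S" and "\<not> (\<exists>x. seg_iso x y1)"
  obtains y0 where "mem y0 S" and "\<not> (\<exists>x. seg_iso x y0)"
    and "\<forall>v. mem v S \<and> rel R v y0 \<longrightarrow> (\<exists>x. seg_iso x v)"
    and "\<forall>x y. seg_iso x y \<longrightarrow> rel R y y0"
proof -
  obtain F where F: "\<forall>x y. rel F x y \<longleftrightarrow> seg_iso x y"
    using seg_iso_graph by blast
  have P: "dsat mem ur (y ## F ## undefined) (DNeg (DEx (drel 2 0 1))) \<longleftrightarrow> \<not> (\<exists>x. seg_iso x y)" for y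
    by (simp add: F)
  have "\<exists>m. mem m S \<and> \<not> (\<exists>x. seg_iso x m) \<and> (\<forall>v. mem v S \<and> rel R v m \<longrightarrow> \<not> \<not> (\<exists>x. seg_iso x v))"
    by (rule wo_minimal[OF S P assms])
  then obtain y0 where y0: "mem y0 S" "\<not> (\<exists>x. seg_iso x y0)"
    and below: "\<forall>v. mem v S \<and> rel R v y0 \<longrightarrow> (\<exists>x. seg_iso x v)"
    by (simp only: not_not) blast
  have "rel R y y0" if "seg_iso x y" for x y
  proof -
    have "y \<noteq> y0"
      using that y0(2) by blast
    moreover have "\<not> rel R y0 y"
      using seg_iso_below_ran[OF that y0(1)] y0(2) by blast
    ultimately show ?thesis
      using wo_linear[OF S, of y y0] that y0(1) by blast
  qed
  then show ?thesis
    using that y0 below by blast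
qed

lemma seg_iso_total_or_onto:
  "(\<forall>x. mem x W \<longrightarrow> (\<exists>y. seg_iso x y)) \<or> (\<forall>y. mem y S \<longrightarrow> (\<exists>x. seg_iso x y))"
proof (rule ccontr)
  assume "\<not> ?thesis"
  then obtain x1 y1 where "mem x1 W" "\<not> (\<exists>y. seg_iso x1 y)" "mem y1 S" "\<not> (\<exists>x. seg_iso x y1)"
    by blast
  obtain x0 where x0: "mem x0 W" "\<not> (\<exists>y. seg_iso x0 y)"
    and below_x0: "\<forall>u. mem u W \<and> rel r u x0 \<longrightarrow> (\<exists>y. seg_iso u y)"
    and dom: "\<forall>x y. seg_iso x y \<longrightarrow> rel r x x0"
    by (rule seg_iso_least_unmatched[OF \<open>mem x1 W\<close> \<open>\<not> (\<exists>y. seg_iso x1 y)\<close>])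
  obtain y0 where y0: "mem y0 S"
    and below_y0: "\<forall>v. mem v S \<and> rel R v y0 \<longrightarrow> (\<exists>x. seg_iso x v)"
    and ran: "\<forall>x y. seg_iso x y \<longrightarrow> rel R y y0"
    by (rule seg_iso_least_unmatched_ran[OF \<open>mem y1 S\<close> \<open>\<not> (\<exists>x. seg_iso x y1)\<close>])
  obtain F where F: "\<forall>x y. rel F x y \<longleftrightarrow> seg_iso x y"
    using seg_iso_graph by blast
  have "iso F x0 y0"
    unfolding iso_in_def
  proof (intro conjI; intro allI impI)
    show "mem u W \<and> rel r u x0 \<and> mem v S \<and> rel R v y0" if "rel F u v" for u v
    proof -
      have "seg_iso u v"
        using that by (simp add: F)
      then show ?thesis
        using dom ran by blast
    qed
    show "\<exists>v. rel F u v" if "mem u W \<and> rel r u x0" for u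
      using that below_x0 by (simp add: F)
    show "\<exists>u. rel F u v" if "mem v S \<and> rel R v y0" for v
      using that below_y0 by (simp add: F)
    show "rel r u u' \<longleftrightarrow> rel R v v'" if "rel F u v \<and> rel F u' v'" for u v u' v'
    proof -
      have "seg_iso u v" "seg_iso u' v'"
        using that by (simp_all add: F)
      then show ?thesis
        using seg_iso_mono seg_iso_reflect by blast
    qed
  qed
  then show False
    using x0 y0 by blast
qed

theorem wo_comparison:
  "lepoll_in W S \<or> (\<exists>x I. mem x W \<and> elts I = {u \<in> elts W. rel r u x} \<and> lepoll_in S I)"
proof -
  obtain F where pairs: "\<forall>p. mem p F \<longrightarrow> (\<exists>x y. opair x y p \<and> mem x W \<and> mem y S)"
    and F: "\<forall>x y. rel F x y \<longleftrightarrow> seg_iso x y"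
    using seg_iso_graph by blast
  have F_inj: "u = u' \<longleftrightarrow> v = v'" if "seg_iso u v" "seg_iso u' v'" for u v u' v'
    using that seg_iso_functional seg_iso_injective by blast
  show ?thesis
  proof (cases "\<forall>x. mem x W \<longrightarrow> (\<exists>y. seg_iso x y)")
    case True
    have "inj_in F W S"
      unfolding inj_in_def
    proof (intro conjI allI impI)
      show "\<exists>v. rel F u v" if "mem u W" for u
        using that True by (simp add: F)
      show "u = u' \<longleftrightarrow> v = v'" if "rel F u v \<and> rel F u' v'" for u v u' v'
        using that F_inj[of u v u' v'] by (simp only: F)
    qed (use pairs in blast)
    then show ?thesis
      unfolding lepoll_in_def by blast
  next
    case False
    then obtain x1 where "mem x1 W" "\<not> (\<exists>y. seg_iso x1 y)"
      by blast
    then obtain x0 where x0: "mem x0 W" and dom: "\<forall>x y. seg_iso x y \<longrightarrow> rel r x x0"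
      by (rule seg_iso_least_unmatched)
    have onto: "\<forall>y. mem y S \<longrightarrow> (\<exists>x. seg_iso x y)"
      using False seg_iso_total_or_onto by blast
    obtain I where I: "elts I = {u \<in> elts W. rel r u x0}"
      using segment_exists by blast
    obtain g where g_pairs: "\<forall>p. mem p g \<longrightarrow> (\<exists>x y. opair x y p \<and> mem x S \<and> mem y I)"
      and g: "\<forall>y x. rel g y x \<longleftrightarrow> mem y S \<and> mem x I \<and> seg_iso x y"
      using relation_exists[of S I "F ## undefined" "drel 2 0 1" "\<lambda>y x. seg_iso x y"] by (auto simp: F)
    have "inj_in g S I"
      unfolding inj_in_def
    proof (intro conjI allI impI)
      show "\<exists>x. rel g y x" if y: "mem y S" for y
      proof -
        obtain x where x: "seg_iso x y"
          using onto y by blast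
        then have "x \<in> elts I"
          unfolding I using dom by blast
        then have "rel g y x"
          using g y x by simp
        then show ?thesis ..
      qed
      show "u = u' \<longleftrightarrow> v = v'" if "rel g u v \<and> rel g u' v'" for u v u' v'
        using that F_inj[of v u v' u'] by (simp only: g)
    qed (use g_pairs in blast)
    then show ?thesis
      unfolding lepoll_in_def using x0 I by blast
  qed
qed

end

section \<open>Existence of a set with room and the main theorem\<close>

definition no_copy_outside :: "'a \<Rightarrow> 'a \<Rightarrow> bool" where
  "no_copy_outside A X \<longleftrightarrow> (\<forall>T. urset T \<and> elts T \<inter> elts A = {} \<longrightarrow> \<not> lepoll_in X T)"

lemma has_room_if_segments_have_copies:
  assumes r: "wo r W" and A: "urset A" "no_copy_outside A W"
    and segments: "\<And>x I B. mem x W \<Longrightarrow> elts I = {u \<in> elts W. rel r u x} \<Longrightarrow> urset B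
      \<Longrightarrow> \<not> no_copy_outside B I"
  shows "has_room A"
  unfolding has_room_def
proof (intro allI impI, elim conjE)
  fix S
  assume S: "urset S" and SA: "elts S \<inter> elts A = {}"
  show "\<exists>E. urset E \<and> elts E \<inter> (elts A \<union> elts S) = {} \<and> lepoll_in S E"
  proof (rule ccontr)
    assume no_E: "\<not> ?thesis"
    obtain A1 where A1: "urset A1" "elts A1 = elts A \<union> elts S"
      using urset_Un A(1) S by blast
    obtain R where R: "wo R S"
      using well_ordering S unfolding urset_in_def by blast
    from wo_comparison[OF r R] show False
    proof
      assume "lepoll_in W S"
      then show False
        using A(2) S SA unfolding no_copy_outside_def by blast
    next
      assume "\<exists>x I. mem x W \<and> elts I = {u \<in> elts W. rel r u x} \<and> lepoll_in S I"
      then obtain x I where x: "mem x W" and I: "elts I = {u \<in> elts W. rel r u x}"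
        and "lepoll_in S I"
        by blast
      have "no_copy_outside A1 I"
        unfolding no_copy_outside_def
        using no_E A1(2) lepoll_in_trans[OF \<open>lepoll_in S I\<close>] by auto
      then show False
        using segments[OF x I A1(1)] by blast
    qed
  qed
qed

lemma has_room_exists: "\<exists>A. urset A \<and> has_room A"
proof -
  obtain e where e: "\<not> ur e" "elts e = {}"
    using empty_set_exists by blast
  then have "urset e"
    unfolding urset_in_def by simp
  show ?thesis
  proof (cases "has_room e")
    case True
    then show ?thesis
      using \<open>urset e\<close> by blast
  next
    case False
    then obtain S1 where S1: "urset S1" "no_copy_outside S1 S1"
      using e(2) unfolding has_room_def no_copy_outside_def by auto
    then obtain r where r: "wo r S1"
      using well_ordering unfolding urset_in_def by blast
    define good where
      "good x \<longleftrightarrow> (\<exists>I. elts I = {u \<in> elts S1. rel r u x} \<and> (\<exists>A. urset A \<and> no_copy_outside A I))" for x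
    have good_dsat: "dsat mem ur (x ## S1 ## r ## undefined)
        (DEx (DConj (DAll (DIff (DMem 0 1) (DConj (DMem 0 3) (drel 4 0 2))))
          (DEx (DConj (durset 0) (DAll (DImp (DConj (durset 0) (DAll (DImp (DMem 0 1) (DNeg (DMem 0 2)))))
            (DNeg (DEx (dinj 0 3 1)))))))))
        \<longleftrightarrow> good x" for x
      unfolding good_def no_copy_outside_def lepoll_in_def by (simp add: set_eq_iff disjoint_iff)
    obtain A0 W0 where "urset A0" "no_copy_outside A0 W0" "wo r W0"
      and "\<And>x I B. mem x W0 \<Longrightarrow> elts I = {u \<in> elts W0. rel r u x} \<Longrightarrow> urset B
        \<Longrightarrow> \<not> no_copy_outside B I"
    proof (cases "\<exists>x. mem x S1 \<and> good x")
      case True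
      then obtain x0 where x0: "mem x0 S1" "good x0" and below: "\<forall>u. mem u S1 \<and> rel r u x0 \<longrightarrow> \<not> good u"
        using wo_minimal[OF r good_dsat] by blast
      then obtain I0 A where I0: "elts I0 = {u \<in> elts S1. rel r u x0}" and A: "urset A" "no_copy_outside A I0"
        unfolding good_def by blast
      have sub: "elts I0 \<subseteq> elts S1"
        using I0 by auto
      have "\<not> no_copy_outside B I"
        if x: "mem x I0" and I: "elts I = {u \<in> elts I0. rel r u x}" and "urset B" for x I B
      proof -
        have "mem x S1" "rel r x x0"
          using I0 x by auto
        then have "\<not> good x"
          using below by blast
        moreover have "elts I = {u \<in> elts S1. rel r u x}"
          using I I0 x wo_trans[OF r _ _ x0(1)] by auto
        ultimately show ?thesis
          using \<open>urset B\<close> unfolding good_def by blast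
      qed
      then show ?thesis
        by (rule that[OF A wo_subset[OF r sub]])
    next
      case False
      then show ?thesis
        using that[OF S1 r] unfolding good_def by blast
    qed
    then show ?thesis
      using has_room_if_segments_have_copies by blast
  qed
qed

end

theorem mainTheorem2:
  fixes mem :: "'a \<Rightarrow> 'a \<Rightarrow> bool" and ur :: "'a \<Rightarrow> bool"
  assumes "ZFCU_R mem ur"
  shows "(\<exists>A. urset_in mem ur A \<and> homogeneous_over mem ur A)
       \<and> (\<forall>A A'. urset_in mem ur A \<and> urset_in mem ur A' \<and> (\<forall>x. mem x A \<longrightarrow> mem x A')
            \<and> homogeneous_over mem ur A \<longrightarrow> homogeneous_over mem ur A')
       \<and> (\<forall>A. urset_in mem ur A \<longrightarrow>
            (\<exists>A'. urset_in mem ur A' \<and> (\<forall>x. mem x A \<longrightarrow> mem x A') \<and> homogeneous_over mem ur A'))"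
proof -
  interpret zfcu_model mem ur
    by (rule zfcu_model.intro[OF assms])
  obtain A0 where A0: "urset A0" "homogeneous_over mem ur A0"
    using has_room_exists has_room_imp_homogeneous_over by blast
  have mono: "homogeneous_over mem ur A'"
    if "homogeneous_over mem ur A" "urset A'" "\<forall>x. mem x A \<longrightarrow> mem x A'" for A A'
    using homogeneous_over_mono that by blast
  have "\<exists>A'. urset A' \<and> (\<forall>x. mem x A \<longrightarrow> mem x A') \<and> homogeneous_over mem ur A'"
    if A: "urset A" for A
  proof -
    obtain A' where A': "urset A'" "elts A' = elts A \<union> elts A0"
      using urset_Un[OF A A0(1)] by blast
    then have "\<forall>x. mem x A \<longrightarrow> mem x A'" and "\<forall>x. mem x A0 \<longrightarrow> mem x A'"
      by auto
    then show ?thesis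
      using A'(1) mono[OF A0(2)] by blast
  qed
  then show ?thesis
    using A0 mono by blast
qed

end
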